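(* Let $(\mathcal{G},\underline{a})$ be a finite metric graph and let $A,B$ be linear maps in $\mathcal{K}$ with $(A,\,B)$ surjective and $AB^*$ self-adjoint. Then the function $L(\cdot,\underline{a})\colon[0,\infty)\to\operatorname{Herm}(\operatorname{Ran}P^\perp)$, $\kappa\mapsto L(\kappa,\underline{a})$, has the following properties: (1) it is norm-continuous; (2) for each $x\in\operatorname{Ran}P^\perp\setminus\{0\}$ the function $\mathfrak{l}[x](\kappa)=\langle L(\kappa,\underline{a})x,x\rangle$ is decreasing at value zero, i.e. if $\mathfrak{l}[x](\kappa_0)=0$ then $\mathfrak{l}[x](\kappa)>0$ for $\kappa<\kappa_0$ and $\mathfrak{l}[x](\kappa)<0$ for $\kappa>\kappa_0$; (3) there is $\gamma\in[0,\infty)$ such that $L(\gamma,\underline{a})<0$ (strictly negative definite on $\operatorname{Ran}P^\perp$).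
   Context: A finite metric graph has a finite set $\mathcal{I}$ of internal edges, identified with intervals $[0,a_i]$, $a_i>0$, and a finite set $\mathcal{E}$ of external edges identified with $[0,\infty)$; $\underline{a}=\{a_i\}_{i\in\mathcal{I}}$. Let $\mathcal{K}=\mathcal{K}_{\mathcal{E}}\oplus\mathcal{K}_{\mathcal{I}}^-\oplus\mathcal{K}_{\mathcal{I}}^+$ with $\mathcal{K}_{\mathcal{E}}\cong\mathbb{C}^{|\mathcal{E}|}$, $\mathcal{K}_{\mathcal{I}}^\pm\cong\mathbb{C}^{|\mathcal{I}|}$. For $A,B$ as stated let $P$ be the orthogonal projector onto $\operatorname{Ker}B$, $P^\perp=1-P$, and $L=(B|_{\operatorname{Ran}B^*})^{-1}AP^\perp$, a Hermitian operator in $\operatorname{Ran}P^\perp$; $\operatorname{Herm}(X)$ denotes the Hermitian operators on $X$. With respect to the decomposition of $\mathcal{K}$ let $$Q=\begin{bmatrix}1&0&0\\0&\frac{1}{\sqrt2}&\frac{1}{\sqrt2}\\0&\frac{1}{\sqrt2}&-\frac{1}{\sqrt2}\end{bmatrix},\qquad D(\kappa,\underline{a})=\begin{bmatrix}-\kappa&0&0\\0&\lambda(\kappa,\underline{a})&0\\0&0&\mu(\kappa,\underline{a})\end{bmatrix},$$ where $\lambda(\kappa,\underline{a})$ and $\mu(\kappa,\underline{a})$ are the diagonal matrices with entries $-\kappa\tanh(\kappa a_i/2)$ and $-\kappa/\tanh(\kappa a_i/2)$ respectively (for $\kappa=0$ the latter is interpreted by continuity as $-2/a_i$). Set $M(\kappa,\underline{a})=QD(\kappa,\underline{a})Q$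 and $L(\kappa,\underline{a})=L+P^\perp M(\kappa,\underline{a})P^\perp$, regarded as a Hermitian operator in $\operatorname{Ran}P^\perp$, for $\kappa\ge0$. *)

theory Defs
  imports Complex_Main "Jordan_Normal_Form.Schur_Decomposition" "Jordan_Normal_Form.Matrix_Kernel"
begin

text \<open>The space K = K_E (+) K_I^- (+) K_I^+ is modelled as complex vectors of dimension
  nE + 2 nI: coordinates 0..<nE are K_E, coordinates nE..<nE+nI are K_I^- and
  coordinates nE+nI..<nE+2nI are K_I^+ (edge i of I corresponds to offset i).\<close>

definition vnorm :: "complex vec \<Rightarrow> real" where
  "vnorm x = sqrt (Re (x \<bullet>c x))"

definition op_norm_on :: "complex vec set \<Rightarrow> (complex vec \<Rightarrow> complex vec) \<Rightarrow> real" where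
  "op_norm_on S f = Sup ((\<lambda>x. vnorm (f x)) ` {x \<in> S. vnorm x \<le> 1})"

definition orth_proj :: "complex vec set \<Rightarrow> complex vec \<Rightarrow> complex vec" where
  "orth_proj S x = (THE y. y \<in> S \<and> (\<forall>z\<in>S. (x - y) \<bullet>c z = 0))"

text \<open>P = orthogonal projector onto Ker B, and P^perp = 1 - P.\<close>
definition projKer :: "complex mat \<Rightarrow> complex vec \<Rightarrow> complex vec" where
  "projKer B x = orth_proj (mat_kernel B) x"

definition projKerPerp :: "complex mat \<Rightarrow> complex vec \<Rightarrow> complex vec" where
  "projKerPerp B x = x - projKer B x"

definition RanPperp :: "nat \<Rightarrow> complex mat \<Rightarrow> complex vec set" where
  "RanPperp n B = projKerPerp B ` carrier_vec n"

definition RanAdj :: "nat \<Rightarrow> complex mat \<Rightarrow> complex vec set" where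
  "RanAdj n B = {mat_adjoint B *\<^sub>v u | u. u \<in> carrier_vec n}"

text \<open>L = (B restricted to Ran B^*)^{-1} A P^perp.\<close>
definition Lop :: "nat \<Rightarrow> complex mat \<Rightarrow> complex mat \<Rightarrow> complex vec \<Rightarrow> complex vec" where
  "Lop n A B x = (THE y. y \<in> RanAdj n B \<and> B *\<^sub>v y = A *\<^sub>v projKerPerp B x)"

definition Qmat :: "nat \<Rightarrow> nat \<Rightarrow> complex mat" where
  "Qmat nE nI = mat (nE + 2 * nI) (nE + 2 * nI) (\<lambda>(i, j).
     if i < nE \<or> j < nE then (if i = j then 1 else 0)
     else if i < nE + nI then
       (if j = i \<or> j = i + nI then complex_of_real (1 / sqrt 2) else 0)
     else
       (if j = i - nI then complex_of_real (1 / sqrt 2)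
        else if j = i then complex_of_real (- 1 / sqrt 2) else 0))"

definition Dentry :: "nat \<Rightarrow> nat \<Rightarrow> (nat \<Rightarrow> real) \<Rightarrow> real \<Rightarrow> nat \<Rightarrow> real" where
  "Dentry nE nI a \<kappa> i =
     (if i < nE then - \<kappa>
      else if i < nE + nI then - \<kappa> * tanh (\<kappa> * a (i - nE) / 2)
      else if \<kappa> = 0 then - 2 / a (i - nE - nI)
      else - \<kappa> / tanh (\<kappa> * a (i - nE - nI) / 2))"

definition Dmat :: "nat \<Rightarrow> nat \<Rightarrow> (nat \<Rightarrow> real) \<Rightarrow> real \<Rightarrow> complex mat" where
  "Dmat nE nI a \<kappa> = mat (nE + 2 * nI) (nE + 2 * nI)
     (\<lambda>(i, j). if i = j then complex_of_real (Dentry nE nI a \<kappa> i) else 0)"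

definition Mmat :: "nat \<Rightarrow> nat \<Rightarrow> (nat \<Rightarrow> real) \<Rightarrow> real \<Rightarrow> complex mat" where
  "Mmat nE nI a \<kappa> = Qmat nE nI * Dmat nE nI a \<kappa> * Qmat nE nI"

definition Lkappa :: "nat \<Rightarrow> nat \<Rightarrow> complex mat \<Rightarrow> complex mat \<Rightarrow> (nat \<Rightarrow> real) \<Rightarrow> real
    \<Rightarrow> complex vec \<Rightarrow> complex vec" where
  "Lkappa nE nI A B a \<kappa> x =
     Lop (nE + 2 * nI) A B x
     + projKerPerp B (Mmat nE nI a \<kappa> *\<^sub>v projKerPerp B x)"

end

theory Submission
  imports Defs "HOL-Analysis.L2_Norm"
begin

text \<open>The orthogonal projection onto \<open>Ran B\<^sup>*\<close> exists (it is built one column of \<open>B\<^sup>*\<close> at a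
  time, by Gram--Schmidt steps), so \<open>P\<^sup>\<perp>\<close> is that projection and \<open>Ran P\<^sup>\<perp> = Ran B\<^sup>*\<close>. On this space
  \<open>L\<close> is the map \<open>B\<^sup>* u \<mapsto> P\<^sup>\<perp> A\<^sup>* u\<close>, well defined and Hermitian because \<open>B A\<^sup>* = A B\<^sup>*\<close>, and
  the projections disappear from the quadratic form:
  \<open>\<langle>L(\<kappa>) x, x\<rangle> = \<langle>L x, x\<rangle> + \<Sum>\<^sub>k D\<^sub>k(\<kappa>) \<bar>(Q x)\<^sub>k\<bar>\<^sup>2\<close>, as \<open>Q\<close> is self-adjoint.
  The diagonal entries \<open>-\<kappa>\<close>, \<open>-\<kappa> tanh(\<kappa> a/2)\<close>, \<open>-\<kappa> coth(\<kappa> a/2)\<close> are continuous and strictly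
  decreasing in \<open>\<kappa> \<ge> 0\<close>, and \<open>Q x \<noteq> 0\<close> for \<open>x \<noteq> 0\<close> since \<open>Q\<^sup>2 = 1\<close>; this gives the strict
  monotonicity (2), and continuity of the entries of \<open>M(\<kappa>)\<close> gives (1). Finally \<open>L\<close> is bounded while
  every \<open>D\<^sub>k(\<kappa>)\<close> tends to \<open>-\<infinity>\<close>, which gives (3).\<close>

lemma mult_mat_vec_index_sum:
  assumes "G \<in> carrier_mat n m" "x \<in> carrier_vec m" "i < n"
  shows "(G *\<^sub>v x) $ i = (\<Sum>j<m. G $$ (i, j) * x $ j)"
  using assms by (auto simp: scalar_prod_def lessThan_atLeast0 intro!: sum.cong)

lemma mult_mat_vec_zero: "G \<in> carrier_mat n m \<Longrightarrow> G *\<^sub>v 0\<^sub>v m = (0\<^sub>v n :: 'a :: semiring_0 vec)"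
  by (intro eq_vecI) auto

lemma mult_mat_index_sum:
  assumes "G \<in> carrier_mat n m" "H \<in> carrier_mat m p" "i < n" "j < p"
  shows "(G * H) $$ (i, j) = (\<Sum>k<m. G $$ (i, k) * H $$ (k, j))"
  using assms by (auto simp: scalar_prod_def lessThan_atLeast0 intro!: sum.cong)

context
  fixes x y z :: "'a :: {conjugatable_ring, comm_ring} vec" and n :: nat
  assumes x: "x \<in> carrier_vec n" and y: "y \<in> carrier_vec n" and z: "z \<in> carrier_vec n"
begin

lemma cscalar_prod_add_left: "(x + y) \<bullet>c z = x \<bullet>c z + y \<bullet>c z"
  using x y z by (simp add: add_scalar_prod_distrib[of _ n])

lemma cscalar_prod_add_right: "z \<bullet>c (x + y) = z \<bullet>c x + z \<bullet>c y"
  using x y z by (simp add: conjugate_add_vec[of _ n] scalar_prod_add_distrib[of _ n])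

lemma cscalar_prod_minus_left: "(x - y) \<bullet>c z = x \<bullet>c z - y \<bullet>c z"
  using x y z by (simp add: minus_scalar_prod_distrib[of _ n])

lemma cscalar_prod_smult_left: "(c \<cdot>\<^sub>v x) \<bullet>c z = c * (x \<bullet>c z)"
  using x z by simp

lemma cscalar_prod_smult_right: "z \<bullet>c (c \<cdot>\<^sub>v x) = conjugate c * (z \<bullet>c x)"
  using scalar_prod_smult_distrib[OF z carrier_vec_conjugate[OF x]] by (simp add: conjugate_smult_vec)

end

lemma cscalar_prod_swap:
  fixes x y :: "complex vec"
  assumes "x \<in> carrier_vec n" "y \<in> carrier_vec n"
  shows "x \<bullet>c y = cnj (y \<bullet>c x)"
  using assms conjugate_conjugate_sprod[OF assms] by (simp add: comm_scalar_prod[of y n "conjugate x"])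

lemma minus_vec_eq_zero_iff:
  fixes x y :: "'a :: ab_group_add vec"
  assumes "x \<in> carrier_vec n" "y \<in> carrier_vec n"
  shows "x - y = 0\<^sub>v n \<longleftrightarrow> x = y"
proof
  assume "x - y = 0\<^sub>v n"
  then have "x $ i = y $ i" if "i < n" for i
    using assms that by (metis carrier_vecD index_minus_vec(1) index_zero_vec(1) right_minus_eq)
  then show "x = y"
    using assms by (intro eq_vecI) auto
qed (use assms in simp)

lemma cscalar_prod_eq_sum:
  "x \<in> carrier_vec n \<Longrightarrow> y \<in> carrier_vec n \<Longrightarrow> x \<bullet>c y = (\<Sum>i<n. x $ i * cnj (y $ i))"
  by (auto simp: scalar_prod_def lessThan_atLeast0 intro!: sum.cong)

lemma cscalar_prod_self_eq_sum:
  assumes "x \<in> carrier_vec n"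
  shows "x \<bullet>c x = complex_of_real (\<Sum>i<n. (cmod (x $ i))\<^sup>2)"
  using assms by (auto simp: scalar_prod_def lessThan_atLeast0 complex_norm_square
      simp del: of_real_power intro!: sum.cong)

lemma Re_cscalar_prod_self: "x \<in> carrier_vec n \<Longrightarrow> Re (x \<bullet>c x) = (\<Sum>i<n. (cmod (x $ i))\<^sup>2)"
  by (metis cscalar_prod_self_eq_sum Re_complex_of_real)

lemma cscalar_prod_self_pos:
  assumes "x \<in> carrier_vec n" "x \<noteq> 0\<^sub>v n"
  shows "0 < Re (x \<bullet>c x)"
  using assms conjugate_square_greater_0_vec[of x n] by (simp add: less_complex_def)

lemma vnorm_eq_L2_set: "x \<in> carrier_vec n \<Longrightarrow> vnorm x = L2_set (\<lambda>i. cmod (x $ i)) {..<n}"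
  by (simp add: vnorm_def L2_set_def cscalar_prod_self_eq_sum)

lemma vnorm_nonneg: "0 \<le> vnorm x"
  unfolding vnorm_def using conjugate_square_ge_0_vec[of x] by (simp add: less_eq_complex_def)

lemma vnorm_square: "x \<in> carrier_vec n \<Longrightarrow> (vnorm x)\<^sup>2 = Re (x \<bullet>c x)"
  by (simp add: vnorm_eq_L2_set L2_set_def cscalar_prod_self_eq_sum sum_nonneg)

lemma vnorm_zero [simp]: "vnorm (0\<^sub>v n) = 0"
  by (simp add: vnorm_def)

lemma norm_index_le_vnorm: "x \<in> carrier_vec n \<Longrightarrow> j < n \<Longrightarrow> cmod (x $ j) \<le> vnorm x"
  by (simp add: vnorm_eq_L2_set) (rule member_le_L2_set; simp)

lemma vnorm_le_sum_norm: "x \<in> carrier_vec n \<Longrightarrow> vnorm x \<le> (\<Sum>i<n. cmod (x $ i))"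
  by (simp add: vnorm_eq_L2_set L2_set_le_sum)

definition entrywise_norm :: "complex mat \<Rightarrow> real" where
  "entrywise_norm G = (\<Sum>i<dim_row G. \<Sum>j<dim_col G. cmod (G $$ (i, j)))"

lemma entrywise_norm_nonneg: "0 \<le> entrywise_norm G"
  by (simp add: entrywise_norm_def sum_nonneg)

lemma sum_norm_mult_mat_vec_le:
  assumes G: "G \<in> carrier_mat m n" and x: "x \<in> carrier_vec n"
  shows "(\<Sum>i<m. cmod ((G *\<^sub>v x) $ i)) \<le> entrywise_norm G * vnorm x"
proof -
  have "cmod ((G *\<^sub>v x) $ i) \<le> (\<Sum>j<n. cmod (G $$ (i, j))) * vnorm x" if "i < m" for i
  proof -
    have "cmod ((G *\<^sub>v x) $ i) \<le> (\<Sum>j<n. cmod (G $$ (i, j)) * cmod (x $ j))"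
      unfolding mult_mat_vec_index_sum[OF G x that] by (rule order_trans[OF norm_sum]) (simp add: norm_mult)
    also have "\<dots> \<le> (\<Sum>j<n. cmod (G $$ (i, j)) * vnorm x)"
      using x by (intro sum_mono mult_left_mono norm_index_le_vnorm) auto
    finally show ?thesis
      by (simp add: sum_distrib_right)
  qed
  then have "(\<Sum>i<m. cmod ((G *\<^sub>v x) $ i)) \<le> (\<Sum>i<m. (\<Sum>j<n. cmod (G $$ (i, j))) * vnorm x)"
    by (intro sum_mono) auto
  then show ?thesis
    using G by (simp add: entrywise_norm_def sum_distrib_right)
qed

lemma vnorm_mult_mat_vec_le:
  assumes "G \<in> carrier_mat m n" "x \<in> carrier_vec n"
  shows "vnorm (G *\<^sub>v x) \<le> entrywise_norm G * vnorm x"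
  using vnorm_le_sum_norm[of "G *\<^sub>v x" m] sum_norm_mult_mat_vec_le[OF assms] assms by simp

lemma norm_cscalar_prod_mult_mat_vec_le:
  assumes G: "G \<in> carrier_mat n n" and x: "x \<in> carrier_vec n"
  shows "cmod ((G *\<^sub>v x) \<bullet>c x) \<le> entrywise_norm G * (vnorm x)\<^sup>2"
proof -
  have "cmod ((G *\<^sub>v x) \<bullet>c x) \<le> (\<Sum>i<n. cmod ((G *\<^sub>v x) $ i) * cmod (x $ i))"
    using G x by (simp add: scalar_prod_def lessThan_atLeast0 norm_mult order_trans[OF norm_sum])
  also have "\<dots> \<le> (\<Sum>i<n. cmod ((G *\<^sub>v x) $ i) * vnorm x)"
    using x by (intro sum_mono mult_left_mono norm_index_le_vnorm) auto
  also have "\<dots> \<le> entrywise_norm G * vnorm x * vnorm x"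
    using sum_norm_mult_mat_vec_le[OF G x] vnorm_nonneg[of x]
    by (simp add: sum_distrib_right[symmetric] mult_right_mono)
  finally show ?thesis
    by (simp add: power2_eq_square mult.assoc)
qed

lemma mat_adjoint_carrier: "M \<in> carrier_mat n m \<Longrightarrow> mat_adjoint M \<in> carrier_mat m n"
  unfolding mat_adjoint_def by auto

lemma mat_adjoint_index:
  "M \<in> carrier_mat n m \<Longrightarrow> i < m \<Longrightarrow> j < n \<Longrightarrow> mat_adjoint M $$ (i, j) = cnj (M $$ (j, i))"
  unfolding mat_adjoint_def by (simp add: mat_of_rows_index)

lemma cscalar_prod_mat_adjoint:
  fixes M :: "complex mat"
  assumes M: "M \<in> carrier_mat n m" and u: "u \<in> carrier_vec n" and z: "z \<in> carrier_vec m"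
  shows "(mat_adjoint M *\<^sub>v u) \<bullet>c z = u \<bullet>c (M *\<^sub>v z)"
proof -
  have M': "mat_adjoint M \<in> carrier_mat m n"
    using M by (rule mat_adjoint_carrier)
  have "(mat_adjoint M *\<^sub>v u) \<bullet>c z = (\<Sum>i<m. \<Sum>j<n. cnj (M $$ (j, i)) * u $ j * cnj (z $ i))"
    using M M' u z by (simp add: scalar_prod_def lessThan_atLeast0 mult_mat_vec_index_sum
        mat_adjoint_index sum_distrib_right)
  also have "\<dots> = (\<Sum>j<n. u $ j * cnj (\<Sum>i<m. M $$ (j, i) * z $ i))"
    by (subst sum.swap) (simp add: sum_distrib_left mult_ac)
  also have "\<dots> = u \<bullet>c (M *\<^sub>v z)"
    using M u z by (simp add: scalar_prod_def lessThan_atLeast0 mult_mat_vec_index_sum)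
  finally show ?thesis .
qed


lemma mat_adjoint_mult:
  fixes X Y :: "complex mat"
  assumes X: "X \<in> carrier_mat n m" and Y: "Y \<in> carrier_mat m p"
  shows "mat_adjoint (X * Y) = mat_adjoint Y * mat_adjoint X"
proof (rule eq_matI)
  fix i j assume "i < dim_row (mat_adjoint Y * mat_adjoint X)" "j < dim_col (mat_adjoint Y * mat_adjoint X)"
  then have i: "i < p" and j: "j < n"
    using X Y mat_adjoint_carrier by auto
  have XY: "X * Y \<in> carrier_mat n p"
    using X Y by simp
  have "mat_adjoint (X * Y) $$ (i, j) = cnj (\<Sum>k<m. X $$ (j, k) * Y $$ (k, i))"
    using mat_adjoint_index[OF XY i j] mult_mat_index_sum[OF X Y j i] by simp
  also have "\<dots> = (\<Sum>k<m. mat_adjoint Y $$ (i, k) * mat_adjoint X $$ (k, j))"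
    unfolding cnj_sum using i j
    by (intro sum.cong refl) (simp add: mat_adjoint_index[OF X] mat_adjoint_index[OF Y] mult.commute)
  also have "\<dots> = (mat_adjoint Y * mat_adjoint X) $$ (i, j)"
    using mult_mat_index_sum[OF mat_adjoint_carrier[OF Y] mat_adjoint_carrier[OF X] i j] by simp
  finally show "mat_adjoint (X * Y) $$ (i, j) = (mat_adjoint Y * mat_adjoint X) $$ (i, j)" .
qed (use X Y mat_adjoint_carrier[of "X * Y" n p] mat_adjoint_carrier[OF X] mat_adjoint_carrier[OF Y] in auto)

lemma mat_adjoint_adjoint:
  fixes X :: "complex mat"
  assumes X: "X \<in> carrier_mat n m"
  shows "mat_adjoint (mat_adjoint X) = X"
  using X mat_adjoint_carrier[OF X] mat_adjoint_carrier[OF mat_adjoint_carrier[OF X]]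
  by (intro eq_matI) (auto simp: mat_adjoint_index[OF mat_adjoint_carrier[OF X]] mat_adjoint_index[OF X])

lemma linear_map_eq_mult_mat_vec:
  fixes f :: "complex vec \<Rightarrow> complex vec"
  assumes f_carrier: "\<And>x. x \<in> carrier_vec n \<Longrightarrow> f x \<in> carrier_vec n"
    and f_add: "\<And>x y. x \<in> carrier_vec n \<Longrightarrow> y \<in> carrier_vec n \<Longrightarrow> f (x + y) = f x + f y"
    and f_smult: "\<And>x c. x \<in> carrier_vec n \<Longrightarrow> f (c \<cdot>\<^sub>v x) = c \<cdot>\<^sub>v f x"
    and x: "x \<in> carrier_vec n"
  shows "f x = mat n n (\<lambda>(i, j). f (unit_vec n j) $ i) *\<^sub>v x"
proof -
  define x_upto where "x_upto k = vec n (\<lambda>i. if i < k then x $ i else 0)" for k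
  have x_upto_carrier: "x_upto k \<in> carrier_vec n" for k
    unfolding x_upto_def by simp
  have "k \<le> n \<Longrightarrow> \<forall>i<n. f (x_upto k) $ i = (\<Sum>j<k. x $ j * f (unit_vec n j) $ i)" for k
  proof (induction k)
    case 0
    have "x_upto 0 = 0 \<cdot>\<^sub>v x"
      unfolding x_upto_def using x by (intro eq_vecI) auto
    then show ?case
      using f_smult[OF x, of 0] f_carrier[OF x] by auto
  next
    case (Suc k)
    have "x_upto (Suc k) = x_upto k + x $ k \<cdot>\<^sub>v unit_vec n k"
      unfolding x_upto_def using Suc.prems by (intro eq_vecI) (auto simp: unit_vec_def less_Suc_eq)
    then have "f (x_upto (Suc k)) = f (x_upto k) + x $ k \<cdot>\<^sub>v f (unit_vec n k)"
      using f_add[OF x_upto_carrier, of "x $ k \<cdot>\<^sub>v unit_vec n k" k] f_smult[of "unit_vec n k" "x $ k"]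
      by simp
    then show ?case
      using Suc f_carrier[OF x_upto_carrier, of k] f_carrier[of "unit_vec n k"] by simp
  qed
  moreover have "x_upto n = x"
    unfolding x_upto_def using x by (intro eq_vecI) auto
  ultimately have "f x $ i = (\<Sum>j<n. x $ j * f (unit_vec n j) $ i)" if "i < n" for i
    using that by (metis le_refl)
  moreover have "(mat n n (\<lambda>(i, j). f (unit_vec n j) $ i) *\<^sub>v x) $ i = (\<Sum>j<n. x $ j * f (unit_vec n j) $ i)"
    if "i < n" for i
    using that x by (subst mult_mat_vec_index_sum[of _ n n]) (auto simp: mult.commute)
  ultimately show ?thesis
    using f_carrier[OF x] by (intro eq_vecI) auto
qed


section \<open>Orthogonal projections onto column spaces\<close>

definition vec_subspace :: "nat \<Rightarrow> complex vec set \<Rightarrow> bool" where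
  "vec_subspace n S \<longleftrightarrow> S \<subseteq> carrier_vec n \<and> 0\<^sub>v n \<in> S \<and>
     (\<forall>x\<in>S. \<forall>y\<in>S. x + y \<in> S) \<and> (\<forall>c. \<forall>x\<in>S. c \<cdot>\<^sub>v x \<in> S)"

lemma vec_subspace_minus:
  assumes S: "vec_subspace n S" and "x \<in> S" "y \<in> S"
  shows "x - y \<in> S"
proof -
  have "x - y = x + (-1) \<cdot>\<^sub>v y"
    using assms unfolding vec_subspace_def by (intro eq_vecI) auto
  then show ?thesis
    using assms unfolding vec_subspace_def by auto
qed

definition is_orth_proj :: "complex vec set \<Rightarrow> complex vec \<Rightarrow> complex vec \<Rightarrow> bool" where
  "is_orth_proj S x w \<longleftrightarrow> w \<in> S \<and> (\<forall>z\<in>S. (x - w) \<bullet>c z = 0)"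

lemma orth_proj_altdef: "orth_proj S x = (THE w. is_orth_proj S x w)"
  unfolding orth_proj_def is_orth_proj_def ..

lemma is_orth_proj_unique:
  assumes S: "vec_subspace n S" and x: "x \<in> carrier_vec n"
    and w1: "is_orth_proj S x w1" and w2: "is_orth_proj S x w2"
  shows "w1 = w2"
proof -
  have carrier: "w1 \<in> carrier_vec n" "w2 \<in> carrier_vec n"
    using S w1 w2 unfolding vec_subspace_def is_orth_proj_def by auto
  have d: "w1 - w2 \<in> S"
    using vec_subspace_minus[OF S] w1 w2 unfolding is_orth_proj_def by auto
  have "w1 - w2 = (x - w2) - (x - w1)"
    using carrier x by (intro eq_vecI) auto
  then have "(w1 - w2) \<bullet>c (w1 - w2) = (x - w2) \<bullet>c (w1 - w2) - (x - w1) \<bullet>c (w1 - w2)"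
    using carrier x by (simp add: cscalar_prod_minus_left[of _ n])
  also have "\<dots> = 0"
    using w1 w2 d unfolding is_orth_proj_def by simp
  finally have "w1 - w2 = 0\<^sub>v n"
    using conjugate_square_eq_0_vec[of "w1 - w2" n] carrier by simp
  then show ?thesis
    using carrier by (simp add: minus_vec_eq_zero_iff)
qed

lemma orth_proj_eqI:
  assumes "vec_subspace n S" "x \<in> carrier_vec n" "is_orth_proj S x w"
  shows "orth_proj S x = w"
  unfolding orth_proj_altdef using assms by (blast intro: is_orth_proj_unique)

definition add_line :: "complex vec set \<Rightarrow> complex vec \<Rightarrow> complex vec set" where
  "add_line S v = {s + c \<cdot>\<^sub>v v | s c. s \<in> S}"

lemma vec_subspace_add_line:
  assumes S: "vec_subspace n S" and v: "v \<in> carrier_vec n"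
  shows "vec_subspace n (add_line S v)"
  unfolding vec_subspace_def
proof (intro conjI ballI allI)
  show "add_line S v \<subseteq> carrier_vec n"
    using S v unfolding vec_subspace_def add_line_def by auto
  have "0\<^sub>v n = 0\<^sub>v n + 0 \<cdot>\<^sub>v v"
    using v by (intro eq_vecI) auto
  then show "0\<^sub>v n \<in> add_line S v"
    using S unfolding vec_subspace_def add_line_def by blast
next
  fix x y assume "x \<in> add_line S v" "y \<in> add_line S v"
  then obtain s c t d where st: "s \<in> S" "t \<in> S" "x = s + c \<cdot>\<^sub>v v" "y = t + d \<cdot>\<^sub>v v"
    unfolding add_line_def by auto
  then have "x + y = (s + t) + (c + d) \<cdot>\<^sub>v v"
    using S v unfolding vec_subspace_def by (intro eq_vecI) (auto simp: distrib_right subset_iff)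
  then show "x + y \<in> add_line S v"
    using S st unfolding vec_subspace_def add_line_def by blast
next
  fix c x assume "x \<in> add_line S v"
  then obtain s d where s: "s \<in> S" "x = s + d \<cdot>\<^sub>v v"
    unfolding add_line_def by auto
  then have "c \<cdot>\<^sub>v x = c \<cdot>\<^sub>v s + (c * d) \<cdot>\<^sub>v v"
    using S v unfolding vec_subspace_def by (intro eq_vecI) (auto simp: distrib_left subset_iff)
  then show "c \<cdot>\<^sub>v x \<in> add_line S v"
    using S s unfolding vec_subspace_def add_line_def by blast
qed

lemma orth_add_line:
  assumes S: "vec_subspace n S" and v: "v \<in> carrier_vec n" and w: "w \<in> S" and r: "r \<in> carrier_vec n"
    and r_orth: "\<And>s. s \<in> S \<Longrightarrow> r \<bullet>c s = 0" and r_orth_v: "r \<bullet>c (v - w) = 0"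
    and z: "z \<in> add_line S v"
  shows "r \<bullet>c z = 0"
proof -
  obtain s c where s: "s \<in> S" and z: "z = s + c \<cdot>\<^sub>v v"
    using z unfolding add_line_def by auto
  have s': "s + c \<cdot>\<^sub>v w \<in> S"
    using S s w unfolding vec_subspace_def by auto
  have carrier: "s \<in> carrier_vec n" "w \<in> carrier_vec n" "s + c \<cdot>\<^sub>v w \<in> carrier_vec n"
    using S s w s' unfolding vec_subspace_def by auto
  have "z = (s + c \<cdot>\<^sub>v w) + c \<cdot>\<^sub>v (v - w)"
    unfolding z using carrier v by (intro eq_vecI) (auto simp: algebra_simps)
  then have "r \<bullet>c z = r \<bullet>c (s + c \<cdot>\<^sub>v w) + cnj c * (r \<bullet>c (v - w))"
    using carrier v r
    by (simp add: cscalar_prod_add_right[of _ n] cscalar_prod_smult_right[of _ n])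
  then show ?thesis
    using r_orth[OF s'] r_orth_v by simp
qed

text \<open>A Gram--Schmidt step: \<open>v' = v - P v\<close> is orthogonal to \<open>S\<close>, and the projection onto
  \<open>S + \<complex> v\<close> is \<open>P x + \<alpha> v'\<close> with \<open>\<alpha> = \<langle>x - P x, v'\<rangle> / \<langle>v', v'\<rangle>\<close>. If \<open>v \<in> S\<close> then \<open>v' = 0\<close>,
  and \<open>\<alpha> = 0\<close> by the convention \<open>z / 0 = 0\<close>.\<close>
lemma is_orth_proj_add_line_exists:
  assumes S: "vec_subspace n S" and v: "v \<in> carrier_vec n" and x: "x \<in> carrier_vec n"
    and proj: "\<And>y. y \<in> carrier_vec n \<Longrightarrow> \<exists>w. is_orth_proj S y w"
  shows "\<exists>w. is_orth_proj (add_line S v) x w"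
proof -
  obtain w0 where w0: "is_orth_proj S v w0"
    using proj[OF v] by blast
  obtain wx where wx: "is_orth_proj S x wx"
    using proj[OF x] by blast
  have w0c: "w0 \<in> carrier_vec n" and wxc: "wx \<in> carrier_vec n"
    using w0 wx S unfolding is_orth_proj_def vec_subspace_def by auto
  define v' where "v' = v - w0"
  define \<alpha> where "\<alpha> = ((x - wx) \<bullet>c v') / (v' \<bullet>c v')"
  define r where "r = (x - wx) - \<alpha> \<cdot>\<^sub>v v'"
  have v'c: "v' \<in> carrier_vec n" and rc: "r \<in> carrier_vec n"
    unfolding v'_def r_def using v x w0c wxc by auto
  have r_orth: "r \<bullet>c s = 0" if s: "s \<in> S" for s
  proof -
    have "s \<in> carrier_vec n"
      using S s unfolding vec_subspace_def by auto
    then have "r \<bullet>c s = (x - wx) \<bullet>c s - \<alpha> * (v' \<bullet>c s)"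
      unfolding r_def using x wxc v'c
      by (simp add: cscalar_prod_minus_left[of _ n] cscalar_prod_smult_left[of _ n])
    then show ?thesis
      using w0 wx s unfolding is_orth_proj_def v'_def by simp
  qed
  have "r \<bullet>c v' = 0"
  proof (cases "v' = 0\<^sub>v n")
    case True
    then show ?thesis
      using rc by simp
  next
    case False
    then have "v' \<bullet>c v' \<noteq> 0"
      using v'c by simp
    then show ?thesis
      using x wxc v'c unfolding r_def \<alpha>_def
      by (simp add: cscalar_prod_minus_left[of _ n] cscalar_prod_smult_left[of _ n])
  qed
  then have "r \<bullet>c z = 0" if "z \<in> add_line S v" for z
    using orth_add_line[OF S v _ rc r_orth _ that] w0 unfolding is_orth_proj_def v'_def by blast
  moreover have "x - (wx + \<alpha> \<cdot>\<^sub>v v') = r"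
    unfolding r_def using x wxc v'c by (intro eq_vecI) auto
  moreover have "wx + \<alpha> \<cdot>\<^sub>v v' = (wx - \<alpha> \<cdot>\<^sub>v w0) + \<alpha> \<cdot>\<^sub>v v"
    unfolding v'_def using v w0c wxc by (intro eq_vecI) (auto simp: algebra_simps)
  moreover have "wx - \<alpha> \<cdot>\<^sub>v w0 \<in> S"
    using S w0 wx unfolding is_orth_proj_def vec_subspace_def by (auto intro!: vec_subspace_minus[OF S])
  ultimately have "is_orth_proj (add_line S v) x (wx + \<alpha> \<cdot>\<^sub>v v')"
    unfolding is_orth_proj_def add_line_def by auto
  then show ?thesis ..
qed

definition mat_range :: "nat \<Rightarrow> complex mat \<Rightarrow> complex vec set" where
  "mat_range n M = {M *\<^sub>v u | u. u \<in> carrier_vec n}"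

definition partial_mat_range :: "nat \<Rightarrow> complex mat \<Rightarrow> nat \<Rightarrow> complex vec set" where
  "partial_mat_range n M k = {M *\<^sub>v u | u. u \<in> carrier_vec n \<and> (\<forall>j\<in>{k..<n}. u $ j = 0)}"

context
  fixes n :: nat and M :: "complex mat"
  assumes M: "M \<in> carrier_mat n n"
begin

lemma partial_mat_range_0: "partial_mat_range n M 0 = {0\<^sub>v n}"
proof -
  have zero: "u = 0\<^sub>v n" if "u \<in> carrier_vec n" "\<forall>j\<in>{0..<n}. u $ j = 0" for u
    using that by (intro eq_vecI) auto
  show ?thesis
    using mult_mat_vec_zero[OF M]
    unfolding partial_mat_range_def by (auto dest: zero intro!: exI[of _ "0\<^sub>v n"])
qed

lemma partial_mat_range_Suc:
  assumes k: "k < n"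
  shows "partial_mat_range n M (Suc k) = add_line (partial_mat_range n M k) (M *\<^sub>v unit_vec n k)"
proof (intro equalityI subsetI)
  fix z assume "z \<in> partial_mat_range n M (Suc k)"
  then obtain u where u: "u \<in> carrier_vec n" "\<forall>j\<in>{Suc k..<n}. u $ j = 0" "z = M *\<^sub>v u"
    unfolding partial_mat_range_def by auto
  define u' where "u' = vec n (\<lambda>j. if j = k then 0 else u $ j)"
  have u': "u' \<in> carrier_vec n"
    unfolding u'_def by simp
  have "u = u' + u $ k \<cdot>\<^sub>v unit_vec n k"
    unfolding u'_def using u by (intro eq_vecI) (auto simp: unit_vec_def)
  then have "z = M *\<^sub>v (u' + u $ k \<cdot>\<^sub>v unit_vec n k)"
    using u by simp
  also have "\<dots> = M *\<^sub>v u' + u $ k \<cdot>\<^sub>v (M *\<^sub>v unit_vec n k)"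
    using u' by (subst mult_add_distrib_mat_vec[OF M]) (auto simp: mult_mat_vec[OF M])
  finally have "z = M *\<^sub>v u' + u $ k \<cdot>\<^sub>v (M *\<^sub>v unit_vec n k)" .
  moreover have "M *\<^sub>v u' \<in> partial_mat_range n M k"
    unfolding partial_mat_range_def u'_def using u by force
  ultimately show "z \<in> add_line (partial_mat_range n M k) (M *\<^sub>v unit_vec n k)"
    unfolding add_line_def by blast
next
  fix z assume "z \<in> add_line (partial_mat_range n M k) (M *\<^sub>v unit_vec n k)"
  then obtain u c where u: "u \<in> carrier_vec n" "\<forall>j\<in>{k..<n}. u $ j = 0"
    and z: "z = M *\<^sub>v u + c \<cdot>\<^sub>v (M *\<^sub>v unit_vec n k)"
    unfolding add_line_def partial_mat_range_def by auto
  have "z = M *\<^sub>v (u + c \<cdot>\<^sub>v unit_vec n k)"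
    unfolding z using u M by (simp add: mult_add_distrib_mat_vec mult_mat_vec)
  moreover have "\<forall>j\<in>{Suc k..<n}. (u + c \<cdot>\<^sub>v unit_vec n k) $ j = 0"
    using u by auto
  ultimately show "z \<in> partial_mat_range n M (Suc k)"
    unfolding partial_mat_range_def using u by force
qed

lemma partial_mat_range_has_orth_proj:
  "k \<le> n \<Longrightarrow> vec_subspace n (partial_mat_range n M k) \<and>
     (\<forall>x\<in>carrier_vec n. \<exists>w. is_orth_proj (partial_mat_range n M k) x w)"
proof (induction k)
  case 0
  have "is_orth_proj {0\<^sub>v n} x (0\<^sub>v n)" if "x \<in> carrier_vec n" for x
    using that unfolding is_orth_proj_def by simp
  moreover have "vec_subspace n {0\<^sub>v n}"
    unfolding vec_subspace_def by auto
  ultimately show ?case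
    unfolding partial_mat_range_0 by blast
next
  case (Suc k)
  have v: "M *\<^sub>v unit_vec n k \<in> carrier_vec n"
    using M by simp
  from Suc have S: "vec_subspace n (partial_mat_range n M k)"
    and proj: "\<And>y. y \<in> carrier_vec n \<Longrightarrow> \<exists>w. is_orth_proj (partial_mat_range n M k) y w"
    by auto
  show ?case
    unfolding partial_mat_range_Suc[OF Suc_le_lessD[OF Suc.prems]]
    using vec_subspace_add_line[OF S v] is_orth_proj_add_line_exists[OF S v _ proj] by blast
qed

lemma mat_range_eq_partial: "mat_range n M = partial_mat_range n M n"
  unfolding mat_range_def partial_mat_range_def by auto

end

locale orth_proj_space =
  fixes n :: nat and S :: "complex vec set"
  assumes subspace: "vec_subspace n S"
    and proj_exists: "x \<in> carrier_vec n \<Longrightarrow> \<exists>w. is_orth_proj S x w"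
begin

lemma subspace_carrier: "z \<in> S \<Longrightarrow> z \<in> carrier_vec n"
  using subspace unfolding vec_subspace_def by blast

lemma subspace_add: "x \<in> S \<Longrightarrow> y \<in> S \<Longrightarrow> x + y \<in> S"
  using subspace unfolding vec_subspace_def by blast

lemma subspace_smult: "x \<in> S \<Longrightarrow> c \<cdot>\<^sub>v x \<in> S"
  using subspace unfolding vec_subspace_def by blast

lemma is_orth_proj_orth_proj: "x \<in> carrier_vec n \<Longrightarrow> is_orth_proj S x (orth_proj S x)"
  using proj_exists orth_proj_eqI[OF subspace] by metis

lemma orth_proj_in: "x \<in> carrier_vec n \<Longrightarrow> orth_proj S x \<in> S"
  using is_orth_proj_orth_proj unfolding is_orth_proj_def by blast

lemma orth_proj_orth: "x \<in> carrier_vec n \<Longrightarrow> z \<in> S \<Longrightarrow> (x - orth_proj S x) \<bullet>c z = 0"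
  using is_orth_proj_orth_proj unfolding is_orth_proj_def by blast

lemma orth_proj_carrier: "x \<in> carrier_vec n \<Longrightarrow> orth_proj S x \<in> carrier_vec n"
  using orth_proj_in subspace_carrier by blast

lemma orth_proj_id: "w \<in> S \<Longrightarrow> orth_proj S w = w"
  using subspace_carrier[of w] by (intro orth_proj_eqI[OF subspace])
    (auto simp: is_orth_proj_def dest: subspace_carrier)

lemma orth_proj_add:
  assumes x: "x \<in> carrier_vec n" and y: "y \<in> carrier_vec n"
  shows "orth_proj S (x + y) = orth_proj S x + orth_proj S y"
proof (rule orth_proj_eqI[OF subspace])
  have px: "orth_proj S x \<in> carrier_vec n" and py: "orth_proj S y \<in> carrier_vec n"
    using x y by (simp_all add: orth_proj_carrier)
  have "x + y - (orth_proj S x + orth_proj S y) = (x - orth_proj S x) + (y - orth_proj S y)"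
    using x y px py by (intro eq_vecI) auto
  moreover have "((x - orth_proj S x) + (y - orth_proj S y)) \<bullet>c z = 0" if "z \<in> S" for z
    using x y px py that orth_proj_orth subspace_carrier[OF that]
    by (simp add: cscalar_prod_add_left[of _ n])
  ultimately show "is_orth_proj S (x + y) (orth_proj S x + orth_proj S y)"
    unfolding is_orth_proj_def using x y by (simp add: orth_proj_in subspace_add)
qed (use x y in auto)

lemma orth_proj_smult:
  assumes x: "x \<in> carrier_vec n"
  shows "orth_proj S (c \<cdot>\<^sub>v x) = c \<cdot>\<^sub>v orth_proj S x"
proof (rule orth_proj_eqI[OF subspace])
  have px: "orth_proj S x \<in> carrier_vec n"
    using x by (simp add: orth_proj_carrier)
  have "c \<cdot>\<^sub>v x - c \<cdot>\<^sub>v orth_proj S x = c \<cdot>\<^sub>v (x - orth_proj S x)"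
    using x px by (intro eq_vecI) (auto simp: algebra_simps)
  moreover have "(c \<cdot>\<^sub>v (x - orth_proj S x)) \<bullet>c z = 0" if "z \<in> S" for z
    using x px that orth_proj_orth subspace_carrier[OF that]
    by (simp add: cscalar_prod_smult_left[of _ n])
  ultimately show "is_orth_proj S (c \<cdot>\<^sub>v x) (c \<cdot>\<^sub>v orth_proj S x)"
    unfolding is_orth_proj_def using x by (simp add: orth_proj_in subspace_smult)
qed (use x in auto)

lemma cscalar_prod_orth_proj_left:
  assumes x: "x \<in> carrier_vec n" and z: "z \<in> S"
  shows "orth_proj S x \<bullet>c z = x \<bullet>c z"
  using orth_proj_orth[OF x z] cscalar_prod_minus_left[OF x orth_proj_carrier[OF x] subspace_carrier[OF z]]
  by simp

lemma cscalar_prod_orth_proj_right: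
  assumes x: "x \<in> carrier_vec n" and z: "z \<in> S"
  shows "z \<bullet>c orth_proj S x = z \<bullet>c x"
  using cscalar_prod_orth_proj_left[OF x z] subspace_carrier[OF z] x orth_proj_carrier[OF x]
  by (metis cscalar_prod_swap)

lemma vnorm_orth_proj_le:
  assumes x: "x \<in> carrier_vec n"
  shows "vnorm (orth_proj S x) \<le> vnorm x"
proof -
  let ?p = "orth_proj S x"
  define r where "r = x - ?p"
  have p: "?p \<in> carrier_vec n" and r: "r \<in> carrier_vec n"
    unfolding r_def using x orth_proj_carrier by auto
  have "?p + r = x"
    unfolding r_def using x p by (intro eq_vecI) auto
  then have "x \<bullet>c x = (?p + r) \<bullet>c (?p + r)"
    by simp
  also have "\<dots> = ?p \<bullet>c ?p + ?p \<bullet>c r + (r \<bullet>c ?p + r \<bullet>c r)"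
    using p r by (simp add: cscalar_prod_add_left[of _ n] cscalar_prod_add_right[of _ n])
  finally have "x \<bullet>c x = ?p \<bullet>c ?p + ?p \<bullet>c r + (r \<bullet>c ?p + r \<bullet>c r)" .
  moreover have "r \<bullet>c ?p = 0" and "?p \<bullet>c r = 0"
    using orth_proj_orth[OF x orth_proj_in[OF x]] cscalar_prod_swap[OF p r]
    unfolding r_def by simp_all
  ultimately have "Re (x \<bullet>c x) = Re (?p \<bullet>c ?p) + Re (r \<bullet>c r)"
    by simp
  then have "(vnorm ?p)\<^sup>2 \<le> (vnorm x)\<^sup>2"
    using vnorm_square[OF p] vnorm_square[OF r] vnorm_square[OF x] zero_le_power2[of "vnorm r"]
    by simp
  then show ?thesis
    using vnorm_nonneg power2_le_imp_le by blast
qed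

end

lemma orth_proj_space_mat_range:
  assumes "M \<in> carrier_mat n n"
  shows "orth_proj_space n (mat_range n M)"
  using partial_mat_range_has_orth_proj[OF assms le_refl]
  unfolding mat_range_eq_partial[OF assms] by unfold_locales auto


section \<open>The operator L on the range of the adjoint of B\<close>

lemma RanAdj_eq_mat_range: "RanAdj n B = mat_range n (mat_adjoint B)"
  unfolding RanAdj_def mat_range_def ..

locale self_adjoint_boundary_conditions =
  fixes n :: nat and A B :: "complex mat"
  assumes A: "A \<in> carrier_mat n n" and B: "B \<in> carrier_mat n n"
    and self_adjoint: "mat_adjoint (A * mat_adjoint B) = A * mat_adjoint B"
begin

lemma A_adjoint: "mat_adjoint A \<in> carrier_mat n n"
  using mat_adjoint_carrier[OF A] .

lemma B_adjoint: "mat_adjoint B \<in> carrier_mat n n"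
  using mat_adjoint_carrier[OF B] .

sublocale Ran: orth_proj_space n "RanAdj n B"
  unfolding RanAdj_eq_mat_range by (rule orth_proj_space_mat_range[OF B_adjoint])

lemma RanAdj_obtain:
  assumes "w \<in> RanAdj n B"
  obtains u where "u \<in> carrier_vec n" "w = mat_adjoint B *\<^sub>v u"
  using assms unfolding RanAdj_def by blast

lemma RanAdj_memI: "u \<in> carrier_vec n \<Longrightarrow> mat_adjoint B *\<^sub>v u \<in> RanAdj n B"
  unfolding RanAdj_def by blast

lemma mult_adjoint_commute:
  assumes u: "u \<in> carrier_vec n"
  shows "B *\<^sub>v (mat_adjoint A *\<^sub>v u) = A *\<^sub>v (mat_adjoint B *\<^sub>v u)"
proof -
  have "B * mat_adjoint A = A * mat_adjoint B"
    using self_adjoint mat_adjoint_mult[OF A B_adjoint] mat_adjoint_adjoint[OF B] by simp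
  then show ?thesis
    using assoc_mult_mat_vec[OF B A_adjoint u] assoc_mult_mat_vec[OF A B_adjoint u] by simp
qed

lemma RanAdj_orth_kernel:
  assumes w: "w \<in> RanAdj n B" and z: "z \<in> carrier_vec n" "B *\<^sub>v z = 0\<^sub>v n"
  shows "w \<bullet>c z = 0"
proof -
  obtain u where u: "u \<in> carrier_vec n" "w = mat_adjoint B *\<^sub>v u"
    using w by (rule RanAdj_obtain)
  show ?thesis
    using cscalar_prod_mat_adjoint[OF B u(1) z(1)] u z(2) by simp
qed

lemma B_residual_zero:
  assumes x: "x \<in> carrier_vec n"
  shows "B *\<^sub>v (x - orth_proj (RanAdj n B) x) = 0\<^sub>v n"
proof -
  define r where "r = x - orth_proj (RanAdj n B) x"
  have r: "r \<in> carrier_vec n"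
    unfolding r_def using x Ran.orth_proj_carrier by simp
  have Br: "B *\<^sub>v r \<in> carrier_vec n"
    using B r by simp
  have "(B *\<^sub>v r) \<bullet>c (B *\<^sub>v r) = (mat_adjoint B *\<^sub>v (B *\<^sub>v r)) \<bullet>c r"
    by (rule cscalar_prod_mat_adjoint[OF B Br r, symmetric])
  also have "\<dots> = cnj (r \<bullet>c (mat_adjoint B *\<^sub>v (B *\<^sub>v r)))"
    using B_adjoint Br r by (intro cscalar_prod_swap[of _ n]) auto
  also have "r \<bullet>c (mat_adjoint B *\<^sub>v (B *\<^sub>v r)) = 0"
    using Ran.orth_proj_orth[OF x RanAdj_memI[OF Br]] unfolding r_def .
  finally show ?thesis
    using Br unfolding r_def by simp
qed

lemma B_orth_proj: "x \<in> carrier_vec n \<Longrightarrow> B *\<^sub>v orth_proj (RanAdj n B) x = B *\<^sub>v x"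
  using B_residual_zero[of x] Ran.orth_proj_carrier[of x] B
  by (simp add: mult_minus_distrib_mat_vec minus_vec_eq_zero_iff[of _ n])

lemma projKerPerp_eq_orth_proj:
  assumes x: "x \<in> carrier_vec n"
  shows "projKerPerp B x = orth_proj (RanAdj n B) x"
proof -
  let ?p = "orth_proj (RanAdj n B) x"
  have p: "?p \<in> carrier_vec n"
    using x Ran.orth_proj_carrier by simp
  have kernel: "vec_subspace n (mat_kernel B)"
    using B unfolding vec_subspace_def
    by (auto simp: mat_kernel_def mult_add_distrib_mat_vec mult_mat_vec)
  have "x - (x - ?p) = ?p"
    using x p by (intro eq_vecI) auto
  then have "is_orth_proj (mat_kernel B) x (x - ?p)"
    unfolding is_orth_proj_def
    using B_residual_zero[OF x] RanAdj_orth_kernel[OF Ran.orth_proj_in[OF x]] B x p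
    by (auto intro: mat_kernelI dest: mat_kernelD[OF B])
  then have "projKer B x = x - ?p"
    unfolding projKer_def using orth_proj_eqI[OF kernel x] by blast
  then show ?thesis
    unfolding projKerPerp_def using x p by (intro eq_vecI) auto
qed

lemma RanPperp_eq_RanAdj: "RanPperp n B = RanAdj n B"
proof (intro equalityI subsetI)
  show "w \<in> RanAdj n B" if "w \<in> RanPperp n B" for w
    using that Ran.orth_proj_in unfolding RanPperp_def by (auto simp: projKerPerp_eq_orth_proj)
  show "w \<in> RanPperp n B" if "w \<in> RanAdj n B" for w
    using that Ran.subspace_carrier[OF that] Ran.orth_proj_id[OF that]
    unfolding RanPperp_def by (metis image_eqI projKerPerp_eq_orth_proj)
qed

lemma B_inj_on_RanAdj:
  assumes y: "y \<in> RanAdj n B" "y' \<in> RanAdj n B" and eq: "B *\<^sub>v y = B *\<^sub>v y'"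
  shows "y = y'"
proof -
  have c: "y \<in> carrier_vec n" "y' \<in> carrier_vec n"
    using y Ran.subspace_carrier by auto
  have "B *\<^sub>v (y - y') = 0\<^sub>v n"
    using B c eq by (simp add: mult_minus_distrib_mat_vec)
  then have "(y - y') \<bullet>c (y - y') = 0"
    using RanAdj_orth_kernel[OF vec_subspace_minus[OF Ran.subspace y]] c by simp
  then show ?thesis
    using c conjugate_square_eq_0_vec[of "y - y'" n] by (simp add: minus_vec_eq_zero_iff)
qed

text \<open>The candidate \<open>P\<^sup>\<perp> A\<^sup>* u\<close> is mapped by \<open>B\<close> to \<open>A P\<^sup>\<perp> x\<close>, since
  \<open>B P\<^sup>\<perp> A\<^sup>* u = B A\<^sup>* u = A B\<^sup>* u\<close>.\<close>
lemma Lop_eq: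
  assumes x: "x \<in> carrier_vec n" and u: "u \<in> carrier_vec n"
    and p: "orth_proj (RanAdj n B) x = mat_adjoint B *\<^sub>v u"
  shows "Lop n A B x = orth_proj (RanAdj n B) (mat_adjoint A *\<^sub>v u)"
  unfolding Lop_def projKerPerp_eq_orth_proj[OF x] p
proof (rule the_equality)
  have Au: "mat_adjoint A *\<^sub>v u \<in> carrier_vec n"
    using A_adjoint u by simp
  have "B *\<^sub>v orth_proj (RanAdj n B) (mat_adjoint A *\<^sub>v u) = A *\<^sub>v (mat_adjoint B *\<^sub>v u)"
    using B_orth_proj[OF Au] mult_adjoint_commute[OF u] by simp
  then show "orth_proj (RanAdj n B) (mat_adjoint A *\<^sub>v u) \<in> RanAdj n B \<and>
      B *\<^sub>v orth_proj (RanAdj n B) (mat_adjoint A *\<^sub>v u) = A *\<^sub>v (mat_adjoint B *\<^sub>v u)"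
    using Ran.orth_proj_in[OF Au] by simp
  then show "y = orth_proj (RanAdj n B) (mat_adjoint A *\<^sub>v u)"
    if "y \<in> RanAdj n B \<and> B *\<^sub>v y = A *\<^sub>v (mat_adjoint B *\<^sub>v u)" for y
    using that B_inj_on_RanAdj by metis
qed

lemma Lop_mult_adjoint:
  "u \<in> carrier_vec n \<Longrightarrow> Lop n A B (mat_adjoint B *\<^sub>v u) = orth_proj (RanAdj n B) (mat_adjoint A *\<^sub>v u)"
  using Lop_eq B_adjoint Ran.orth_proj_id[OF RanAdj_memI] by simp

lemma Lop_obtain:
  assumes x: "x \<in> carrier_vec n"
  obtains u where "u \<in> carrier_vec n" "Lop n A B x = orth_proj (RanAdj n B) (mat_adjoint A *\<^sub>v u)"
    "orth_proj (RanAdj n B) x = mat_adjoint B *\<^sub>v u"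
  using Ran.orth_proj_in[OF x] by (metis RanAdj_obtain Lop_eq[OF x])

lemma Lop_in_RanAdj: "x \<in> carrier_vec n \<Longrightarrow> Lop n A B x \<in> RanAdj n B"
  using A_adjoint Ran.orth_proj_in by (metis Lop_obtain mult_mat_vec_carrier)

lemma Lop_carrier: "x \<in> carrier_vec n \<Longrightarrow> Lop n A B x \<in> carrier_vec n"
  using Lop_in_RanAdj Ran.subspace_carrier by blast

lemma Lop_add:
  assumes x: "x \<in> carrier_vec n" and y: "y \<in> carrier_vec n"
  shows "Lop n A B (x + y) = Lop n A B x + Lop n A B y"
proof -
  obtain u where u: "u \<in> carrier_vec n" "Lop n A B x = orth_proj (RanAdj n B) (mat_adjoint A *\<^sub>v u)"
    "orth_proj (RanAdj n B) x = mat_adjoint B *\<^sub>v u"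
    using x by (rule Lop_obtain)
  obtain v where v: "v \<in> carrier_vec n" "Lop n A B y = orth_proj (RanAdj n B) (mat_adjoint A *\<^sub>v v)"
    "orth_proj (RanAdj n B) y = mat_adjoint B *\<^sub>v v"
    using y by (rule Lop_obtain)
  have "orth_proj (RanAdj n B) (x + y) = mat_adjoint B *\<^sub>v (u + v)"
    using Ran.orth_proj_add[OF x y] u v B_adjoint by (simp add: mult_add_distrib_mat_vec)
  then have "Lop n A B (x + y) = orth_proj (RanAdj n B) (mat_adjoint A *\<^sub>v u + mat_adjoint A *\<^sub>v v)"
    using Lop_eq[of "x + y" "u + v"] x y u v A_adjoint by (simp add: mult_add_distrib_mat_vec)
  then show ?thesis
    using Ran.orth_proj_add u v A_adjoint by simp
qed

lemma Lop_smult: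
  assumes x: "x \<in> carrier_vec n"
  shows "Lop n A B (c \<cdot>\<^sub>v x) = c \<cdot>\<^sub>v Lop n A B x"
proof -
  obtain u where u: "u \<in> carrier_vec n" "Lop n A B x = orth_proj (RanAdj n B) (mat_adjoint A *\<^sub>v u)"
    "orth_proj (RanAdj n B) x = mat_adjoint B *\<^sub>v u"
    using x by (rule Lop_obtain)
  have "orth_proj (RanAdj n B) (c \<cdot>\<^sub>v x) = mat_adjoint B *\<^sub>v (c \<cdot>\<^sub>v u)"
    using Ran.orth_proj_smult[OF x] u B_adjoint by (simp add: mult_mat_vec)
  then have "Lop n A B (c \<cdot>\<^sub>v x) = orth_proj (RanAdj n B) (c \<cdot>\<^sub>v (mat_adjoint A *\<^sub>v u))"
    using Lop_eq[of "c \<cdot>\<^sub>v x" "c \<cdot>\<^sub>v u"] x u A_adjoint by (simp add: mult_mat_vec)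
  then show ?thesis
    using Ran.orth_proj_smult u A_adjoint by simp
qed

lemma Lop_hermitian:
  assumes x: "x \<in> RanAdj n B" and y: "y \<in> RanAdj n B"
  shows "Lop n A B x \<bullet>c y = x \<bullet>c Lop n A B y"
proof -
  obtain u where u: "u \<in> carrier_vec n" "x = mat_adjoint B *\<^sub>v u"
    using x by (rule RanAdj_obtain)
  obtain v where v: "v \<in> carrier_vec n" "y = mat_adjoint B *\<^sub>v v"
    using y by (rule RanAdj_obtain)
  have Au: "mat_adjoint A *\<^sub>v u \<in> carrier_vec n" and Av: "mat_adjoint A *\<^sub>v v \<in> carrier_vec n"
    using A_adjoint u v by auto
  have "Lop n A B x \<bullet>c y = u \<bullet>c (A *\<^sub>v (mat_adjoint B *\<^sub>v v))"
    using Lop_mult_adjoint[OF u(1)] Ran.cscalar_prod_orth_proj_left[OF Au y]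
      cscalar_prod_mat_adjoint[OF A u(1)] B_adjoint u v by simp
  also have "\<dots> = u \<bullet>c (B *\<^sub>v (mat_adjoint A *\<^sub>v v))"
    using mult_adjoint_commute[OF v(1)] by simp
  also have "\<dots> = x \<bullet>c Lop n A B y"
    using Lop_mult_adjoint[OF v(1)] Ran.cscalar_prod_orth_proj_right[OF Av x]
      cscalar_prod_mat_adjoint[OF B u(1) Av] u v by simp
  finally show ?thesis .
qed

lemma Lop_quadratic_form_bounded: "\<exists>C\<ge>0. \<forall>x\<in>carrier_vec n. cmod (Lop n A B x \<bullet>c x) \<le> C * (vnorm x)\<^sup>2"
proof (intro exI conjI ballI)
  let ?L = "mat n n (\<lambda>(i, j). Lop n A B (unit_vec n j) $ i)"
  show "0 \<le> entrywise_norm ?L"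
    by (rule entrywise_norm_nonneg)
  fix x :: "complex vec" assume x: "x \<in> carrier_vec n"
  have "Lop n A B x = ?L *\<^sub>v x"
    by (rule linear_map_eq_mult_mat_vec[OF Lop_carrier Lop_add Lop_smult x])
  then show "cmod (Lop n A B x \<bullet>c x) \<le> entrywise_norm ?L * (vnorm x)\<^sup>2"
    using norm_cscalar_prod_mult_mat_vec_le[OF _ x, of ?L] by simp
qed

end


section \<open>The matrices Q, D and M\<close>

lemma inv_sqrt2_square: "complex_of_real (1 / sqrt 2) * complex_of_real (1 / sqrt 2) = 1 / 2"
  by (simp flip: of_real_mult)

context
  fixes nE nI :: nat
begin

lemma Qmat_carrier: "Qmat nE nI \<in> carrier_mat (nE + 2 * nI) (nE + 2 * nI)"
  unfolding Qmat_def by simp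

lemma Dmat_carrier: "Dmat nE nI a \<kappa> \<in> carrier_mat (nE + 2 * nI) (nE + 2 * nI)"
  unfolding Dmat_def by simp

lemma Mmat_carrier: "Mmat nE nI a \<kappa> \<in> carrier_mat (nE + 2 * nI) (nE + 2 * nI)"
  unfolding Mmat_def by (rule mult_carrier_mat[OF mult_carrier_mat[OF Qmat_carrier Dmat_carrier] Qmat_carrier])

lemma Qmat_mult_vec_carrier: "x \<in> carrier_vec (nE + 2 * nI) \<Longrightarrow> Qmat nE nI *\<^sub>v x \<in> carrier_vec (nE + 2 * nI)"
  by (rule mult_mat_vec_carrier[OF Qmat_carrier])

lemma Mmat_mult_vec_carrier:
  "x \<in> carrier_vec (nE + 2 * nI) \<Longrightarrow> Mmat nE nI a \<kappa> *\<^sub>v x \<in> carrier_vec (nE + 2 * nI)"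
  by (rule mult_mat_vec_carrier[OF Mmat_carrier])

lemma Qmat_mult_vec_index:
  assumes x: "x \<in> carrier_vec (nE + 2 * nI)" and i: "i < nE + 2 * nI"
  shows "(Qmat nE nI *\<^sub>v x) $ i =
    (if i < nE then x $ i
     else if i < nE + nI then complex_of_real (1 / sqrt 2) * (x $ i + x $ (i + nI))
     else complex_of_real (1 / sqrt 2) * (x $ (i - nI) - x $ i))"
proof -
  let ?q = "complex_of_real (1 / sqrt 2)"
  have "(Qmat nE nI *\<^sub>v x) $ i = (\<Sum>j<nE + 2 * nI. Qmat nE nI $$ (i, j) * x $ j)"
    by (rule mult_mat_vec_index_sum[OF Qmat_carrier x i])
  also have "\<dots> = (\<Sum>j<nE + 2 * nI.
      (if i < nE then (if j = i then x $ i else 0)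
       else if i < nE + nI then (if j = i then ?q * x $ i else 0) + (if j = i + nI then ?q * x $ (i + nI) else 0)
       else (if j = i - nI then ?q * x $ (i - nI) else 0) - (if j = i then ?q * x $ i else 0)))"
    using i by (intro sum.cong) (auto simp: Qmat_def)
  finally show ?thesis
    using i by (auto simp: sum.distrib sum_subtractf distrib_left right_diff_distrib)
qed

lemma mat_adjoint_Qmat: "mat_adjoint (Qmat nE nI) = Qmat nE nI"
proof (rule eq_matI)
  fix i j assume "i < dim_row (Qmat nE nI)" "j < dim_col (Qmat nE nI)"
  then have i: "i < nE + 2 * nI" and j: "j < nE + 2 * nI"
    using Qmat_carrier by auto
  show "mat_adjoint (Qmat nE nI) $$ (i, j) = Qmat nE nI $$ (i, j)"
    unfolding mat_adjoint_index[OF Qmat_carrier i j] using i j by (auto simp: Qmat_def)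
qed (use mat_adjoint_carrier[OF Qmat_carrier] in \<open>auto simp: Qmat_def\<close>)

lemma Qmat_involution:
  assumes x: "x \<in> carrier_vec (nE + 2 * nI)"
  shows "Qmat nE nI *\<^sub>v (Qmat nE nI *\<^sub>v x) = x"
proof (rule eq_vecI)
  let ?q = "complex_of_real (1 / sqrt 2)"
  have qx: "Qmat nE nI *\<^sub>v x \<in> carrier_vec (nE + 2 * nI)"
    using Qmat_carrier x by simp
  have ring: "r * (r * (b + c) + r * (b - c)) = (r * r) * (2 * b)"
    "r * (r * (b + c) - r * (b - c)) = (r * r) * (2 * c)" for r b c :: complex
    by (simp_all add: algebra_simps)
  have plus: "?q * (?q * (b + c) + ?q * (b - c)) = b"
    and minus: "?q * (?q * (b + c) - ?q * (b - c)) = c" for b c :: complex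
    unfolding ring inv_sqrt2_square by simp_all
  fix i assume "i < dim_vec x"
  then have i: "i < nE + 2 * nI"
    using x by simp
  consider "i < nE" | "nE \<le> i" "i < nE + nI" | "nE + nI \<le> i"
    by linarith
  then show "(Qmat nE nI *\<^sub>v (Qmat nE nI *\<^sub>v x)) $ i = x $ i"
  proof cases
    case 1
    then show ?thesis
      using Qmat_mult_vec_index[OF qx i] Qmat_mult_vec_index[OF x i] by simp
  next
    case 2
    then show ?thesis
      using Qmat_mult_vec_index[OF qx i] Qmat_mult_vec_index[OF x i]
        Qmat_mult_vec_index[OF x, of "i + nI"] plus by simp
  next
    case 3
    then have i': "i - nI < nE + 2 * nI" "\<not> i - nI < nE" "i - nI < nE + nI" "i - nI + nI = i"
      using i by auto
    have "(Qmat nE nI *\<^sub>v (Qmat nE nI *\<^sub>v x)) $ i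
        = ?q * ((Qmat nE nI *\<^sub>v x) $ (i - nI) - (Qmat nE nI *\<^sub>v x) $ i)"
      using Qmat_mult_vec_index[OF qx i] 3 by simp
    also have "\<dots> = ?q * (?q * (x $ (i - nI) + x $ i) - ?q * (x $ (i - nI) - x $ i))"
      using Qmat_mult_vec_index[OF x i'(1)] Qmat_mult_vec_index[OF x i] i' 3 by simp
    also have "\<dots> = x $ i"
      by (rule minus)
    finally show ?thesis .
  qed
qed (use x Qmat_carrier in simp)

lemma cscalar_prod_Qmat:
  assumes "w \<in> carrier_vec (nE + 2 * nI)" "z \<in> carrier_vec (nE + 2 * nI)"
  shows "(Qmat nE nI *\<^sub>v w) \<bullet>c z = w \<bullet>c (Qmat nE nI *\<^sub>v z)"
  using cscalar_prod_mat_adjoint[OF Qmat_carrier assms] unfolding mat_adjoint_Qmat .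

lemma sum_norm_Qmat_mult_vec:
  assumes x: "x \<in> carrier_vec (nE + 2 * nI)"
  shows "(\<Sum>k<nE + 2 * nI. (cmod ((Qmat nE nI *\<^sub>v x) $ k))\<^sup>2) = (vnorm x)\<^sup>2"
proof -
  have qx: "Qmat nE nI *\<^sub>v x \<in> carrier_vec (nE + 2 * nI)"
    using Qmat_carrier x by simp
  have "(Qmat nE nI *\<^sub>v x) \<bullet>c (Qmat nE nI *\<^sub>v x) = x \<bullet>c x"
    using cscalar_prod_Qmat[OF qx x] Qmat_involution[OF x] by simp
  then show ?thesis
    unfolding Re_cscalar_prod_self[OF qx, symmetric] vnorm_square[OF x] by simp
qed

lemma Qmat_mult_vec_nonzero:
  assumes x: "x \<in> carrier_vec (nE + 2 * nI)" "x \<noteq> 0\<^sub>v (nE + 2 * nI)"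
  shows "Qmat nE nI *\<^sub>v x \<noteq> 0\<^sub>v (nE + 2 * nI)"
  using Qmat_involution[OF x(1)] x(2) mult_mat_vec_zero[OF Qmat_carrier] by metis

lemma Dmat_mult_vec_index:
  assumes y: "y \<in> carrier_vec (nE + 2 * nI)" and k: "k < nE + 2 * nI"
  shows "(Dmat nE nI a \<kappa> *\<^sub>v y) $ k = complex_of_real (Dentry nE nI a \<kappa> k) * y $ k"
proof -
  have "(Dmat nE nI a \<kappa> *\<^sub>v y) $ k = (\<Sum>j<nE + 2 * nI. Dmat nE nI a \<kappa> $$ (k, j) * y $ j)"
    by (rule mult_mat_vec_index_sum[OF Dmat_carrier y k])
  also have "\<dots> = (\<Sum>j<nE + 2 * nI. if j = k then complex_of_real (Dentry nE nI a \<kappa> k) * y $ k else 0)"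
    using k by (intro sum.cong) (auto simp: Dmat_def)
  finally show ?thesis
    using k by simp
qed

lemma cscalar_prod_Mmat:
  assumes x: "x \<in> carrier_vec (nE + 2 * nI)" and y: "y \<in> carrier_vec (nE + 2 * nI)"
  shows "(Mmat nE nI a \<kappa> *\<^sub>v x) \<bullet>c y = (\<Sum>k<nE + 2 * nI.
      complex_of_real (Dentry nE nI a \<kappa> k) * ((Qmat nE nI *\<^sub>v x) $ k * cnj ((Qmat nE nI *\<^sub>v y) $ k)))"
proof -
  let ?Q = "Qmat nE nI" and ?D = "Dmat nE nI a \<kappa>"
  have qx: "?Q *\<^sub>v x \<in> carrier_vec (nE + 2 * nI)" and qy: "?Q *\<^sub>v y \<in> carrier_vec (nE + 2 * nI)"
    using Qmat_carrier x y by auto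
  have dqx: "?D *\<^sub>v (?Q *\<^sub>v x) \<in> carrier_vec (nE + 2 * nI)"
    using mult_mat_vec_carrier[OF Dmat_carrier qx] .
  have "Mmat nE nI a \<kappa> *\<^sub>v x = (?Q * ?D) *\<^sub>v (?Q *\<^sub>v x)"
    unfolding Mmat_def by (rule assoc_mult_mat_vec[OF mult_carrier_mat[OF Qmat_carrier Dmat_carrier] Qmat_carrier x])
  also have "\<dots> = ?Q *\<^sub>v (?D *\<^sub>v (?Q *\<^sub>v x))"
    by (rule assoc_mult_mat_vec[OF Qmat_carrier Dmat_carrier qx])
  finally have "Mmat nE nI a \<kappa> *\<^sub>v x = ?Q *\<^sub>v (?D *\<^sub>v (?Q *\<^sub>v x))" .
  then have "(Mmat nE nI a \<kappa> *\<^sub>v x) \<bullet>c y = (?D *\<^sub>v (?Q *\<^sub>v x)) \<bullet>c (?Q *\<^sub>v y)"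
    using cscalar_prod_Qmat[OF dqx y] by simp
  also have "\<dots> = (\<Sum>k<nE + 2 * nI. (?D *\<^sub>v (?Q *\<^sub>v x)) $ k * cnj ((?Q *\<^sub>v y) $ k))"
    by (rule cscalar_prod_eq_sum[OF dqx qy])
  finally show ?thesis
    by (simp add: Dmat_mult_vec_index[OF qx] mult.assoc)
qed

lemma Mmat_hermitian:
  assumes x: "x \<in> carrier_vec (nE + 2 * nI)" and y: "y \<in> carrier_vec (nE + 2 * nI)"
  shows "(Mmat nE nI a \<kappa> *\<^sub>v x) \<bullet>c y = x \<bullet>c (Mmat nE nI a \<kappa> *\<^sub>v y)"
proof -
  have "x \<bullet>c (Mmat nE nI a \<kappa> *\<^sub>v y) = cnj ((Mmat nE nI a \<kappa> *\<^sub>v y) \<bullet>c x)"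
    using cscalar_prod_swap[OF x Mmat_mult_vec_carrier[OF y]] .
  then show ?thesis
    unfolding cscalar_prod_Mmat[OF x y] cscalar_prod_Mmat[OF y x] by (simp add: cnj_sum mult_ac)
qed

lemma Re_cscalar_prod_Mmat_self:
  assumes x: "x \<in> carrier_vec (nE + 2 * nI)"
  shows "Re ((Mmat nE nI a \<kappa> *\<^sub>v x) \<bullet>c x) =
    (\<Sum>k<nE + 2 * nI. Dentry nE nI a \<kappa> k * (cmod ((Qmat nE nI *\<^sub>v x) $ k))\<^sup>2)"
proof -
  have norm: "z * cnj z = complex_of_real ((cmod z)\<^sup>2)" for z
    by (rule complex_norm_square[symmetric])
  show ?thesis
    unfolding cscalar_prod_Mmat[OF x x] Re_sum norm of_real_mult[symmetric] Re_complex_of_real ..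
qed

lemma Mmat_index:
  assumes i: "i < nE + 2 * nI" and j: "j < nE + 2 * nI"
  shows "Mmat nE nI a \<kappa> $$ (i, j) = (\<Sum>k<nE + 2 * nI.
    Qmat nE nI $$ (i, k) * complex_of_real (Dentry nE nI a \<kappa> k) * Qmat nE nI $$ (k, j))"
proof -
  let ?Q = "Qmat nE nI" and ?D = "Dmat nE nI a \<kappa>"
  have "(?Q * ?D) $$ (i, k) = ?Q $$ (i, k) * complex_of_real (Dentry nE nI a \<kappa> k)"
    if k: "k < nE + 2 * nI" for k
  proof -
    have "(?Q * ?D) $$ (i, k) = (\<Sum>l<nE + 2 * nI. ?Q $$ (i, l) * ?D $$ (l, k))"
      by (rule mult_mat_index_sum[OF Qmat_carrier Dmat_carrier i k])
    also have "\<dots> = (\<Sum>l<nE + 2 * nI. if l = k then ?Q $$ (i, k) * complex_of_real (Dentry nE nI a \<kappa> k) else 0)"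
      using k by (intro sum.cong) (auto simp: Dmat_def)
    finally show ?thesis
      using k by simp
  qed
  then have "(\<Sum>k<nE + 2 * nI. (?Q * ?D) $$ (i, k) * ?Q $$ (k, j)) =
      (\<Sum>k<nE + 2 * nI. ?Q $$ (i, k) * complex_of_real (Dentry nE nI a \<kappa> k) * ?Q $$ (k, j))"
    by (intro sum.cong) auto
  then show ?thesis
    unfolding Mmat_def mult_mat_index_sum[OF mult_carrier_mat[OF Qmat_carrier Dmat_carrier] Qmat_carrier i j] .
qed

end


section \<open>The diagonal entries of D as functions of \<kappa>\<close>

definition xcoth :: "real \<Rightarrow> real" where
  "xcoth x = x * cosh x / sinh x"

lemma sinh_lt_mult_cosh:
  fixes t :: real
  assumes t: "0 < t"
  shows "sinh t < t * cosh t"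
proof -
  have "(\<lambda>x. x * cosh x - sinh x) 0 < (\<lambda>x. x * cosh x - sinh x) t"
  proof (rule DERIV_pos_imp_increasing_open[OF t])
    fix x :: real assume "0 < x" "x < t"
    then show "\<exists>y. ((\<lambda>x. x * cosh x - sinh x) has_real_derivative y) (at x) \<and> 0 < y"
      by (intro exI[of _ "x * sinh x"]) (auto intro!: derivative_eq_intros)
  qed (intro continuous_intros)
  then show ?thesis
    by simp
qed

lemma xcoth_gt_1: "0 < t \<Longrightarrow> 1 < xcoth t"
  unfolding xcoth_def using sinh_lt_mult_cosh[of t] by (simp add: field_simps)

lemma xcoth_strict_mono:
  fixes s t :: real
  assumes s: "0 < s" and st: "s < t"
  shows "xcoth s < xcoth t"
  unfolding xcoth_def
proof (rule DERIV_pos_imp_increasing[OF st])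
  fix x :: real assume "s \<le> x" "x \<le> t"
  then have x: "0 < x"
    using s by simp
  have "1 < cosh x"
    using cosh_real_ge_1[of x] cosh_real_one_iff[of x] x by linarith
  then have "x < x * cosh x"
    using x by simp
  also have "\<dots> \<le> sinh x * cosh x"
    using real_le_x_sinh[of x] x cosh_real_pos[of x]
    by (intro mult_right_mono) (simp_all add: sinh_field_def exp_minus)
  finally have "x < sinh x * cosh x" .
  moreover have "(cosh x + sinh x * x) * sinh x - x * cosh x * cosh x = sinh x * cosh x - x"
    using cosh_square_eq[of x] by (simp add: power2_eq_square algebra_simps)
  ultimately show "\<exists>y. ((\<lambda>x. x * cosh x / sinh x) has_real_derivative y) (at x) \<and> 0 < y"
    using x by (intro exI[of _ "(sinh x * cosh x - x) / (sinh x * sinh x)"])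
      (auto intro!: derivative_eq_intros simp: power2_eq_square)
qed

lemma div_tanh_eq_xcoth:
  fixes b \<kappa> :: real
  assumes "0 < b" "\<kappa> \<noteq> 0"
  shows "\<kappa> / tanh (\<kappa> * b / 2) = 2 / b * xcoth (\<kappa> * b / 2)"
  unfolding xcoth_def tanh_def using assms by (simp add: field_simps)

lemma div_tanh_gt:
  fixes b t :: real
  assumes b: "0 < b" and t: "0 < t"
  shows "2 / b < t / tanh (t * b / 2)"
proof -
  have "2 / b * 1 < 2 / b * xcoth (t * b / 2)"
    using xcoth_gt_1[of "t * b / 2"] t b by (intro mult_strict_left_mono) auto
  then show ?thesis
    using div_tanh_eq_xcoth[OF b, of t] t by simp
qed

lemma div_tanh_strict_mono:
  fixes b s t :: real
  assumes b: "0 < b" and s: "0 < s" and st: "s < t"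
  shows "s / tanh (s * b / 2) < t / tanh (t * b / 2)"
proof -
  have "2 / b * xcoth (s * b / 2) < 2 / b * xcoth (t * b / 2)"
    using xcoth_strict_mono[of "s * b / 2" "t * b / 2"] s st b by (intro mult_strict_left_mono) auto
  then show ?thesis
    using div_tanh_eq_xcoth[OF b, of t] div_tanh_eq_xcoth[OF b, of s] s st by simp
qed

lemma mult_tanh_strict_mono:
  fixes b s t :: real
  assumes b: "0 < b" and s: "0 \<le> s" and st: "s < t"
  shows "s * tanh (s * b / 2) < t * tanh (t * b / 2)"
proof -
  have "tanh (s * b / 2) \<le> tanh (t * b / 2)"
    using st b by (simp add: strict_mono_less_eq[OF tanh_real_strict_mono] divide_right_mono)
  then have "s * tanh (s * b / 2) \<le> s * tanh (t * b / 2)"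
    using s by (rule mult_left_mono)
  also have "\<dots> < t * tanh (t * b / 2)"
    using s st b by simp
  finally show ?thesis .
qed

lemma tendsto_div_tanh:
  fixes b :: real
  assumes b: "0 < b"
  shows "((\<lambda>\<kappa>. \<kappa> / tanh (\<kappa> * b / 2)) \<longlongrightarrow> 2 / b) (at 0)"
proof -
  have "((\<lambda>\<kappa>. sinh (\<kappa> * b / 2)) has_field_derivative b / 2) (at 0)"
    by (auto intro!: derivative_eq_intros)
  then have sinh_lim: "((\<lambda>\<kappa>. sinh (\<kappa> * b / 2) / \<kappa>) \<longlongrightarrow> b / 2) (at 0)"
    unfolding has_field_derivative_iff by simp
  have cosh_lim: "((\<lambda>\<kappa>. cosh (\<kappa> * b / 2)) \<longlongrightarrow> 1) (at 0)"
    by (rule tendsto_eq_intros refl | simp)+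
  have "cosh y / (sinh y / \<kappa>) = \<kappa> / tanh y" for y \<kappa> :: real
    by (simp add: tanh_def mult.commute)
  then show ?thesis
    using tendsto_divide[OF cosh_lim sinh_lim] b by simp
qed

lemma isCont_div_tanh_extended:
  fixes b :: real
  assumes b: "0 < b"
  shows "isCont (\<lambda>\<kappa>. if \<kappa> = 0 then 2 / b else \<kappa> / tanh (\<kappa> * b / 2)) \<kappa>0"
proof (cases "\<kappa>0 = 0")
  case True
  have "\<forall>\<^sub>F \<kappa> in at 0. \<kappa> / tanh (\<kappa> * b / 2) = (if \<kappa> = 0 then 2 / b else \<kappa> / tanh (\<kappa> * b / 2))"
    by (auto simp: eventually_at_filter)
  then show ?thesis
    unfolding True isCont_def using tendsto_div_tanh[OF b] by (simp add: tendsto_cong)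
next
  case False
  have "\<forall>\<^sub>F \<kappa> in nhds \<kappa>0. \<kappa> \<in> - {0}"
    by (rule eventually_nhds_in_open) (use False in auto)
  then have ev: "\<forall>\<^sub>F \<kappa> in nhds \<kappa>0.
      \<kappa> / tanh (\<kappa> * b / 2) = (if \<kappa> = 0 then 2 / b else \<kappa> / tanh (\<kappa> * b / 2))"
    by (rule eventually_mono) auto
  have "isCont (\<lambda>\<kappa>. \<kappa> / tanh (\<kappa> * b / 2)) \<kappa>0"
    using False b by (intro continuous_intros) auto
  then show ?thesis
    using isCont_cong[OF ev] by simp
qed

lemma tanh_ge_half:
  fixes x :: real
  assumes "1 \<le> x"
  shows "1 / 2 \<le> tanh x"
proof -
  have "exp (- 2 * x) \<le> exp (- 2)"
    using assms by simp
  also have "\<dots> = 1 / exp 2"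
    by (simp add: exp_minus field_simps)
  also have "\<dots> \<le> 1 / 3"
    using exp_ge_add_one_self[of 2] by (simp add: field_simps)
  finally have "1 / 2 * (1 + exp (- 2 * x)) \<le> 1 - exp (- 2 * x)"
    by simp
  then show ?thesis
    by (simp add: tanh_real_altdef le_divide_eq add_pos_pos)
qed

lemma mult_tanh_ge_half:
  fixes b \<gamma> :: real
  assumes b: "0 < b" and \<gamma>: "2 / b \<le> \<gamma>"
  shows "\<gamma> / 2 \<le> \<gamma> * tanh (\<gamma> * b / 2)"
proof -
  have "1 \<le> \<gamma> * b / 2"
    using \<gamma> b by (simp add: field_simps)
  moreover have "0 \<le> \<gamma>"
    using \<gamma> b divide_pos_pos[of 2 b] by linarith
  ultimately have "\<gamma> * (1 / 2) \<le> \<gamma> * tanh (\<gamma> * b / 2)"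
    by (intro mult_left_mono tanh_ge_half)
  then show ?thesis
    by simp
qed

lemma le_div_tanh:
  fixes b \<gamma> :: real
  assumes b: "0 < b" and \<gamma>: "0 < \<gamma>"
  shows "\<gamma> \<le> \<gamma> / tanh (\<gamma> * b / 2)"
proof -
  have "0 < tanh (\<gamma> * b / 2)" "tanh (\<gamma> * b / 2) < 1"
    using \<gamma> b by (simp_all add: tanh_real_lt_1)
  then show ?thesis
    using \<gamma> by (simp add: field_simps)
qed

context
  fixes nE nI :: nat and a :: "nat \<Rightarrow> real"
  assumes a_pos: "\<forall>i<nI. 0 < a i"
begin

lemma Dentry_strict_antimono:
  assumes k: "k < nE + 2 * nI" and s: "0 \<le> s" and st: "s < t"
  shows "Dentry nE nI a t k < Dentry nE nI a s k"
proof -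
  have t: "0 < t"
    using s st by simp
  consider "k < nE" | "nE \<le> k" "k < nE + nI" | "nE + nI \<le> k"
    by linarith
  then show ?thesis
  proof cases
    case 1
    then show ?thesis
      using st by (simp add: Dentry_def)
  next
    case 2
    then show ?thesis
      using mult_tanh_strict_mono[OF _ s st, of "a (k - nE)"] a_pos by (simp add: Dentry_def)
  next
    case 3
    then have b: "0 < a (k - nE - nI)"
      using a_pos k by auto
    show ?thesis
      using 3 s t div_tanh_gt[OF b t] div_tanh_strict_mono[OF b _ st]
      by (auto simp: Dentry_def not_less)
  qed
qed

lemma isCont_Dentry:
  assumes k: "k < nE + 2 * nI"
  shows "isCont (\<lambda>\<kappa>. Dentry nE nI a \<kappa> k) \<kappa>0"
proof -
  consider "k < nE" | "nE \<le> k" "k < nE + nI" | "nE + nI \<le> k"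
    by linarith
  then show ?thesis
  proof cases
    case 3
    then have "(\<lambda>\<kappa>. Dentry nE nI a \<kappa> k) =
        (\<lambda>\<kappa>. - (if \<kappa> = 0 then 2 / a (k - nE - nI) else \<kappa> / tanh (\<kappa> * a (k - nE - nI) / 2)))"
      by (auto simp: Dentry_def)
    moreover have "0 < a (k - nE - nI)"
      using 3 a_pos k by auto
    ultimately show ?thesis
      by (simp add: isCont_minus isCont_div_tanh_extended)
  qed (auto simp: Dentry_def intro!: continuous_intros)
qed

text \<open>The summand \<open>\<Sum>i<nI. 2 / a i\<close> makes \<open>\<gamma> \<ge> 2 / a\<^sub>i\<close>, hence \<open>tanh (\<gamma> a\<^sub>i / 2) \<ge> 1/2\<close>, on every
  internal edge.\<close>
lemma Dentry_le_neg:
  assumes k: "k < nE + 2 * nI" and C: "0 \<le> C"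
  shows "Dentry nE nI a (2 * (C + 1) + (\<Sum>i<nI. 2 / a i)) k \<le> - (C + 1)"
proof -
  define \<gamma> where "\<gamma> = 2 * (C + 1) + (\<Sum>i<nI. 2 / a i)"
  have "0 \<le> (\<Sum>i<nI. 2 / a i)"
    using a_pos by (intro sum_nonneg) auto
  then have \<gamma>: "2 * (C + 1) \<le> \<gamma>"
    unfolding \<gamma>_def by simp
  have \<gamma>_a: "2 / a i \<le> \<gamma>" if "i < nI" for i
    using member_le_sum[of i "{..<nI}" "\<lambda>i. 2 / a i"] that a_pos C unfolding \<gamma>_def by force
  consider "k < nE" | "nE \<le> k" "k < nE + nI" | "nE + nI \<le> k"
    by linarith
  then have "Dentry nE nI a \<gamma> k \<le> - (C + 1)"
  proof cases
    case 1
    then show ?thesis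
      using \<gamma> C by (simp add: Dentry_def)
  next
    case 2
    then show ?thesis
      using mult_tanh_ge_half[of "a (k - nE)" \<gamma>] \<gamma>_a[of "k - nE"] a_pos \<gamma> by (simp add: Dentry_def)
  next
    case 3
    then show ?thesis
      using le_div_tanh[of "a (k - nE - nI)" \<gamma>] a_pos k \<gamma> C by (simp add: Dentry_def)
  qed
  then show ?thesis
    unfolding \<gamma>_def .
qed

end


section \<open>The family L(\<kappa>, a)\<close>

lemma op_norm_on_le:
  assumes "0\<^sub>v n \<in> S" and "\<And>x. x \<in> S \<Longrightarrow> vnorm (f x) \<le> C * vnorm x" and "0 \<le> C"
  shows "op_norm_on S f \<le> C"
  unfolding op_norm_on_def
proof (rule cSup_least)
  show "(\<lambda>x. vnorm (f x)) ` {x \<in> S. vnorm x \<le> 1} \<noteq> {}"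
    using assms(1) by force
  show "v \<le> C" if "v \<in> (\<lambda>x. vnorm (f x)) ` {x \<in> S. vnorm x \<le> 1}" for v
    using that assms(2,3) by (force intro: order_trans mult_left_le)
qed

locale metric_graph_boundary_conditions =
  self_adjoint_boundary_conditions "nE + 2 * nI" A B for nE nI :: nat and A B :: "complex mat" +
  fixes a :: "nat \<Rightarrow> real"
  assumes a_pos: "\<forall>i<nI. 0 < a i"
begin

lemma Lkappa_eq:
  assumes x: "x \<in> RanAdj (nE + 2 * nI) B"
  shows "Lkappa nE nI A B a \<kappa> x =
    Lop (nE + 2 * nI) A B x + orth_proj (RanAdj (nE + 2 * nI) B) (Mmat nE nI a \<kappa> *\<^sub>v x)"
proof -
  have "x \<in> carrier_vec (nE + 2 * nI)"
    using Ran.subspace_carrier[OF x] .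
  then show ?thesis
    using Mmat_mult_vec_carrier
    unfolding Lkappa_def using Ran.orth_proj_id[OF x] by (simp add: projKerPerp_eq_orth_proj)
qed

lemma Lkappa_in_RanAdj:
  assumes x: "x \<in> RanAdj (nE + 2 * nI) B"
  shows "Lkappa nE nI A B a \<kappa> x \<in> RanAdj (nE + 2 * nI) B"
proof -
  have xc: "x \<in> carrier_vec (nE + 2 * nI)"
    using Ran.subspace_carrier[OF x] .
  show ?thesis
    unfolding Lkappa_eq[OF x]
    by (intro Ran.subspace_add Lop_in_RanAdj Ran.orth_proj_in xc Mmat_mult_vec_carrier)
qed

lemma Lkappa_hermitian:
  assumes x: "x \<in> RanAdj (nE + 2 * nI) B" and y: "y \<in> RanAdj (nE + 2 * nI) B"
  shows "Lkappa nE nI A B a \<kappa> x \<bullet>c y = x \<bullet>c Lkappa nE nI A B a \<kappa> y"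
proof -
  let ?n = "nE + 2 * nI" and ?P = "orth_proj (RanAdj (nE + 2 * nI) B)" and ?M = "Mmat nE nI a \<kappa>"
  have xc: "x \<in> carrier_vec ?n" and yc: "y \<in> carrier_vec ?n"
    using x y Ran.subspace_carrier by auto
  have Mx: "?M *\<^sub>v x \<in> carrier_vec ?n" and My: "?M *\<^sub>v y \<in> carrier_vec ?n"
    using xc yc by (simp_all add: Mmat_mult_vec_carrier)
  have "Lkappa nE nI A B a \<kappa> x \<bullet>c y = Lop ?n A B x \<bullet>c y + (?M *\<^sub>v x) \<bullet>c y"
    using Lkappa_eq[OF x] Lop_carrier[OF xc] Ran.orth_proj_carrier[OF Mx] yc
    by (simp add: cscalar_prod_add_left[of _ ?n] Ran.cscalar_prod_orth_proj_left[OF Mx y])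
  also have "\<dots> = x \<bullet>c Lop ?n A B y + x \<bullet>c (?M *\<^sub>v y)"
    using Lop_hermitian[OF x y] Mmat_hermitian[OF xc yc] by simp
  also have "\<dots> = x \<bullet>c Lkappa nE nI A B a \<kappa> y"
    using Lkappa_eq[OF y] Lop_carrier[OF yc] Ran.orth_proj_carrier[OF My] xc
    by (simp add: cscalar_prod_add_right[of _ ?n] Ran.cscalar_prod_orth_proj_right[OF My x])
  finally show ?thesis .
qed

lemma Re_cscalar_prod_Lkappa_self:
  assumes x: "x \<in> RanAdj (nE + 2 * nI) B"
  shows "Re (Lkappa nE nI A B a \<kappa> x \<bullet>c x) = Re (Lop (nE + 2 * nI) A B x \<bullet>c x) +
    (\<Sum>k<nE + 2 * nI. Dentry nE nI a \<kappa> k * (cmod ((Qmat nE nI *\<^sub>v x) $ k))\<^sup>2)"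
proof -
  let ?n = "nE + 2 * nI" and ?M = "Mmat nE nI a \<kappa>"
  have xc: "x \<in> carrier_vec ?n"
    using x Ran.subspace_carrier by auto
  have Mx: "?M *\<^sub>v x \<in> carrier_vec ?n"
    using xc by (rule Mmat_mult_vec_carrier)
  have "Lkappa nE nI A B a \<kappa> x \<bullet>c x = Lop ?n A B x \<bullet>c x + (?M *\<^sub>v x) \<bullet>c x"
    using Lkappa_eq[OF x] Lop_carrier[OF xc] Ran.orth_proj_carrier[OF Mx] xc
    by (simp add: cscalar_prod_add_left[of _ ?n] Ran.cscalar_prod_orth_proj_left[OF Mx x])
  then show ?thesis
    using Re_cscalar_prod_Mmat_self[OF xc] by simp
qed

lemma vnorm_Lkappa_diff_le:
  assumes x: "x \<in> RanAdj (nE + 2 * nI) B"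
  shows "vnorm (Lkappa nE nI A B a \<kappa> x - Lkappa nE nI A B a \<sigma> x)
    \<le> entrywise_norm (Mmat nE nI a \<kappa> - Mmat nE nI a \<sigma>) * vnorm x"
proof -
  let ?n = "nE + 2 * nI" and ?P = "orth_proj (RanAdj (nE + 2 * nI) B)"
  let ?Mk = "Mmat nE nI a \<kappa>" and ?Ms = "Mmat nE nI a \<sigma>"
  have xc: "x \<in> carrier_vec ?n"
    using x Ran.subspace_carrier by auto
  have diff: "?Mk - ?Ms \<in> carrier_mat ?n ?n"
    by (rule minus_carrier_mat[OF Mmat_carrier])
  have carrier: "(?Mk - ?Ms) *\<^sub>v x \<in> carrier_vec ?n" "?Ms *\<^sub>v x \<in> carrier_vec ?n"
    using mult_mat_vec_carrier[OF diff xc] Mmat_mult_vec_carrier[OF xc] by auto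
  have "?Mk *\<^sub>v x = (?Mk - ?Ms) *\<^sub>v x + ?Ms *\<^sub>v x"
    using Mmat_carrier[of nE nI a \<kappa>] Mmat_carrier[of nE nI a \<sigma>] xc
    by (intro eq_vecI) (auto simp: minus_mult_distrib_mat_vec[of _ ?n ?n])
  then have "Lkappa nE nI A B a \<kappa> x - Lkappa nE nI A B a \<sigma> x = ?P ((?Mk - ?Ms) *\<^sub>v x)"
    using Lkappa_eq[OF x] Ran.orth_proj_add[OF carrier] Ran.orth_proj_carrier[OF carrier(1)]
      Ran.orth_proj_carrier[OF carrier(2)] Lop_carrier[OF xc]
    by (intro eq_vecI) auto
  also have "vnorm \<dots> \<le> vnorm ((?Mk - ?Ms) *\<^sub>v x)"
    using carrier(1) by (rule Ran.vnorm_orth_proj_le)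
  also have "\<dots> \<le> entrywise_norm (?Mk - ?Ms) * vnorm x"
    by (rule vnorm_mult_mat_vec_le[OF diff xc])
  finally show ?thesis .
qed

lemma isCont_entrywise_norm_Mmat_diff:
  "isCont (\<lambda>\<kappa>. entrywise_norm (Mmat nE nI a \<kappa> - Mmat nE nI a \<sigma>)) \<kappa>0"
proof -
  have "entrywise_norm (Mmat nE nI a \<kappa> - Mmat nE nI a \<sigma>) = (\<Sum>i<nE + 2 * nI. \<Sum>j<nE + 2 * nI. cmod
      ((\<Sum>k<nE + 2 * nI. Qmat nE nI $$ (i, k) * complex_of_real (Dentry nE nI a \<kappa> k) * Qmat nE nI $$ (k, j))
       - Mmat nE nI a \<sigma> $$ (i, j)))" for \<kappa>
    using Mmat_carrier[of nE nI a \<kappa>] Mmat_carrier[of nE nI a \<sigma>] unfolding entrywise_norm_def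
    by (intro sum.cong refl) (auto simp: Mmat_index)
  moreover have "isCont (\<lambda>\<kappa>. Dentry nE nI a \<kappa> k) \<kappa>0" if "k < nE + 2 * nI" for k
    using isCont_Dentry[OF a_pos that] .
  ultimately show ?thesis
    by (auto intro!: continuous_intros)
qed

lemma Lkappa_norm_continuous:
  assumes e: "0 < \<epsilon>"
  shows "\<exists>\<delta>>0. \<forall>\<kappa>. \<bar>\<kappa> - \<kappa>0\<bar> < \<delta> \<longrightarrow>
    op_norm_on (RanAdj (nE + 2 * nI) B) (\<lambda>x. Lkappa nE nI A B a \<kappa> x - Lkappa nE nI A B a \<kappa>0 x) < \<epsilon>"
proof -
  define g where "g \<kappa> = entrywise_norm (Mmat nE nI a \<kappa> - Mmat nE nI a \<kappa>0)" for \<kappa>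
  have "g \<kappa>0 = 0"
    using Mmat_carrier[of nE nI a \<kappa>0] by (simp add: g_def entrywise_norm_def)
  moreover have "g \<midarrow>\<kappa>0\<rightarrow> g \<kappa>0"
    using isCont_entrywise_norm_Mmat_diff unfolding g_def isCont_def .
  ultimately obtain \<delta> where \<delta>: "0 < \<delta>" "\<And>\<kappa>. \<kappa> \<noteq> \<kappa>0 \<Longrightarrow> \<bar>\<kappa> - \<kappa>0\<bar> < \<delta> \<Longrightarrow> \<bar>g \<kappa>\<bar> < \<epsilon>"
    using e unfolding LIM_eq by force
  have "op_norm_on (RanAdj (nE + 2 * nI) B) (\<lambda>x. Lkappa nE nI A B a \<kappa> x - Lkappa nE nI A B a \<kappa>0 x) < \<epsilon>"
    if "\<bar>\<kappa> - \<kappa>0\<bar> < \<delta>" for \<kappa>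
  proof -
    have "g \<kappa> < \<epsilon>"
      using \<delta>(2)[OF _ that] \<open>g \<kappa>0 = 0\<close> e by (cases "\<kappa> = \<kappa>0") auto
    moreover have "op_norm_on (RanAdj (nE + 2 * nI) B) (\<lambda>x. Lkappa nE nI A B a \<kappa> x - Lkappa nE nI A B a \<kappa>0 x) \<le> g \<kappa>"
      unfolding g_def using Ran.subspace vnorm_Lkappa_diff_le entrywise_norm_nonneg
      by (intro op_norm_on_le) (auto simp: vec_subspace_def)
    ultimately show ?thesis
      by linarith
  qed
  then show ?thesis
    using \<delta>(1) by blast
qed

lemma Re_cscalar_prod_Lkappa_strict_antimono:
  assumes x: "x \<in> RanAdj (nE + 2 * nI) B" "x \<noteq> 0\<^sub>v (nE + 2 * nI)" and s: "0 \<le> s" "s < t"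
  shows "Re (Lkappa nE nI A B a t x \<bullet>c x) < Re (Lkappa nE nI A B a s x \<bullet>c x)"
proof -
  let ?n = "nE + 2 * nI" and ?y = "Qmat nE nI *\<^sub>v x"
  have xc: "x \<in> carrier_vec ?n"
    using x Ran.subspace_carrier by auto
  have y: "?y \<in> carrier_vec ?n" "?y \<noteq> 0\<^sub>v ?n"
    using Qmat_mult_vec_carrier[OF xc] Qmat_mult_vec_nonzero[OF xc x(2)] by auto
  then obtain k where k: "k < ?n" "?y $ k \<noteq> 0"
    by (metis eq_vecI carrier_vecD index_zero_vec)
  have "0 < (\<Sum>j<?n. (Dentry nE nI a s j - Dentry nE nI a t j) * (cmod (?y $ j))\<^sup>2)"
    using Dentry_strict_antimono[OF a_pos _ s] k
    by (intro sum_pos2[of _ k]) (auto intro!: mult_nonneg_nonneg simp: less_imp_le)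
  then show ?thesis
    unfolding Re_cscalar_prod_Lkappa_self[OF x(1)] by (simp add: sum_subtractf left_diff_distrib)
qed

lemma Re_cscalar_prod_Lkappa_sign_change:
  assumes x: "x \<in> RanAdj (nE + 2 * nI) B" "x \<noteq> 0\<^sub>v (nE + 2 * nI)"
    and zero: "0 \<le> \<kappa>0" "Lkappa nE nI A B a \<kappa>0 x \<bullet>c x = 0"
  shows "0 \<le> \<kappa> \<Longrightarrow> \<kappa> < \<kappa>0 \<Longrightarrow> 0 < Re (Lkappa nE nI A B a \<kappa> x \<bullet>c x)"
    and "\<kappa>0 < \<kappa> \<Longrightarrow> Re (Lkappa nE nI A B a \<kappa> x \<bullet>c x) < 0"
  using Re_cscalar_prod_Lkappa_strict_antimono[OF x] zero by fastforce+

lemma Lkappa_negative_definite: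
  "\<exists>\<gamma>\<ge>0. \<forall>x\<in>RanAdj (nE + 2 * nI) B. x \<noteq> 0\<^sub>v (nE + 2 * nI) \<longrightarrow> Re (Lkappa nE nI A B a \<gamma> x \<bullet>c x) < 0"
proof -
  let ?n = "nE + 2 * nI"
  obtain C where C: "0 \<le> C" "\<And>x. x \<in> carrier_vec ?n \<Longrightarrow> cmod (Lop ?n A B x \<bullet>c x) \<le> C * (vnorm x)\<^sup>2"
    using Lop_quadratic_form_bounded by blast
  define \<gamma> where "\<gamma> = 2 * (C + 1) + (\<Sum>i<nI. 2 / a i)"
  have "0 \<le> \<gamma>"
    unfolding \<gamma>_def using C a_pos by (auto intro!: add_nonneg_nonneg sum_nonneg)
  moreover have "Re (Lkappa nE nI A B a \<gamma> x \<bullet>c x) < 0"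
    if x: "x \<in> RanAdj ?n B" "x \<noteq> 0\<^sub>v ?n" for x
  proof -
    have xc: "x \<in> carrier_vec ?n"
      using x Ran.subspace_carrier by auto
    let ?y = "Qmat nE nI *\<^sub>v x"
    have "Re (Lkappa nE nI A B a \<gamma> x \<bullet>c x)
        = Re (Lop ?n A B x \<bullet>c x) + (\<Sum>k<?n. Dentry nE nI a \<gamma> k * (cmod (?y $ k))\<^sup>2)"
      by (rule Re_cscalar_prod_Lkappa_self[OF x(1)])
    also have "\<dots> \<le> C * (vnorm x)\<^sup>2 + (\<Sum>k<?n. - (C + 1) * (cmod (?y $ k))\<^sup>2)"
    proof (rule add_mono)
      show "Re (Lop ?n A B x \<bullet>c x) \<le> C * (vnorm x)\<^sup>2"
        using complex_Re_le_cmod C(2)[OF xc] by (rule order_trans)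
      show "(\<Sum>k<?n. Dentry nE nI a \<gamma> k * (cmod (?y $ k))\<^sup>2) \<le> (\<Sum>k<?n. - (C + 1) * (cmod (?y $ k))\<^sup>2)"
        unfolding \<gamma>_def using Dentry_le_neg[OF a_pos _ C(1)] by (intro sum_mono mult_right_mono) auto
    qed
    also have "\<dots> = C * (vnorm x)\<^sup>2 + - (C + 1) * (vnorm x)\<^sup>2"
      unfolding sum_distrib_left[symmetric] sum_norm_Qmat_mult_vec[OF xc] ..
    also have "\<dots> = - (vnorm x)\<^sup>2"
      by (simp add: algebra_simps)
    also have "\<dots> < 0"
      using cscalar_prod_self_pos[OF xc x(2)] vnorm_square[OF xc] by simp
    finally show ?thesis .
  qed
  ultimately show ?thesis
    by blast
qed

end

theorem lemma5p3:
  fixes nE nI :: nat and a :: "nat \<Rightarrow> real" and A B :: "complex mat"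
  defines "n \<equiv> nE + 2 * nI"
  assumes a_pos: "\<forall>i < nI. a i > 0"
    and A_dim: "A \<in> carrier_mat n n" and B_dim: "B \<in> carrier_mat n n"
    and surj: "\<forall>y \<in> carrier_vec n. \<exists>u \<in> carrier_vec n. \<exists>v \<in> carrier_vec n.
                 A *\<^sub>v u + B *\<^sub>v v = y"
    and selfadj: "mat_adjoint (A * mat_adjoint B) = A * mat_adjoint B"
  shows
    \<comment> \<open>L(kappa,a) is a Hermitian operator in Ran P^perp for every kappa \<ge> 0\<close>
    "(\<forall>\<kappa> \<ge> 0. \<forall>x \<in> RanPperp n B.
        Lkappa nE nI A B a \<kappa> x \<in> RanPperp n B \<and>
        (\<forall>y \<in> RanPperp n B. Lkappa nE nI A B a \<kappa> x \<bullet>c y = x \<bullet>c Lkappa nE nI A B a \<kappa> y))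
     \<comment> \<open>(1) norm continuity on [0,\<infinity>)\<close>
     \<and> (\<forall>\<kappa>0 \<ge> 0. \<forall>\<epsilon> > 0. \<exists>\<delta> > 0. \<forall>\<kappa> \<ge> 0. \<bar>\<kappa> - \<kappa>0\<bar> < \<delta> \<longrightarrow>
          op_norm_on (RanPperp n B)
            (\<lambda>x. Lkappa nE nI A B a \<kappa> x - Lkappa nE nI A B a \<kappa>0 x) < \<epsilon>)
     \<comment> \<open>(2) the quadratic forms are decreasing at value zero\<close>
     \<and> (\<forall>x \<in> RanPperp n B. x \<noteq> 0\<^sub>v n \<longrightarrow>
          (\<forall>\<kappa>0 \<ge> 0. Lkappa nE nI A B a \<kappa>0 x \<bullet>c x = 0 \<longrightarrow>
             (\<forall>\<kappa> \<ge> 0. \<kappa> < \<kappa>0 \<longrightarrow> Re (Lkappa nE nI A B a \<kappa> x \<bullet>c x) > 0) \<and>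
             (\<forall>\<kappa>. \<kappa> > \<kappa>0 \<longrightarrow> Re (Lkappa nE nI A B a \<kappa> x \<bullet>c x) < 0)))
     \<comment> \<open>(3) strict negativity for some gamma\<close>
     \<and> (\<exists>\<gamma> \<ge> 0. \<forall>x \<in> RanPperp n B. x \<noteq> 0\<^sub>v n \<longrightarrow>
          Re (Lkappa nE nI A B a \<gamma> x \<bullet>c x) < 0)"
proof -
  interpret metric_graph_boundary_conditions nE nI A B a
    using A_dim B_dim selfadj a_pos unfolding n_def by unfold_locales auto
  show ?thesis
    unfolding n_def RanPperp_eq_RanAdj
    apply (intro conjI)
    subgoal
      by (simp add: Lkappa_in_RanAdj Lkappa_hermitian)
    subgoal
      using Lkappa_norm_continuous by (meson less_imp_le)
    subgoal
      using Re_cscalar_prod_Lkappa_sign_change by (simp add: less_imp_le)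
    subgoal
      by (rule Lkappa_negative_definite)
    done
qed

end
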